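(* Let $P$ be a rooted forest on $[n]$ whose labeling is natural, let $M$ be the transition matrix of the promotion graph of $P$ with edge weights given by indeterminates $x_1,\dots,x_n$, and let $\overline{M}=M+(x_1+\cdots+x_n)\mathbb{1}$. Then $$\det(\lambda\mathbb{1}-\overline{M})=\prod_{\substack{S\subseteq[n]\\ S \text{ upper set in } P}}(\lambda-x_S)^{d_S},$$ where $x_S=\sum_{i\in S}x_i$ and $d_S$ is the derangement number of $S$ in the lattice $L$ of upper sets of $P$. In other words, for each upper set $S$ of $P$ there is an eigenvalue $x_S$ of $\overline{M}$ with multiplicity $d_S$.
   Context: A rooted forest is a disjoint union of rooted trees, where a rooted tree is a connected finite poset in which each element is covered by at most one element. Natural labeling: $i\prec j$ implies $i<j$. $\mathcal{L}(P)=\{\pi\in S_n : i\prec j \Rightarrow \pi^{-1}_i<\pi^{-1}_j\}$, in one-line notation $\pi=\pi_1\cdots\pi_n$. $\pi\tau_i$ ($1\le i<n$) swaps $\pi_i,\pi_{i+1}$ if they are incomparable in $P$ and is $\pi$ otherwise; operators act on the right; $\partial_j=\tau_j\tau_{j+1}\cdots\tau_{n-1}$ for $1\le j\le n$. Promotion graph: vertices $\mathcal{L}(P)$, an edge $\pi\to\pi\partial_j$ of weight $x_{\pi_j}$ for each $\pi$ and $j\in[n]$. Transition matrix $M$: for $\pi'\ne\pi$, $M(\pi',\pi)$ is the sum of weights of edges $\pi\to\pi'$; $M(\pi,\pi)$ is minus the sum of weights of edges $\pi\to\pi'$ with $\pi'\ne\pi$. An upper set $S$ is a subset with $x\in S,\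 y\succeq x\Rightarrow y\in S$. $L$ is the set of upper sets of $P$ ordered by inclusion (minimum $\emptyset$, maximum $P$). For $S\in L$, $d_S=\sum_{T\in L,\,T\supseteq S}\mu(S,T)\,f([T,P])$, where $\mu$ is the Möbius function of $L$ and $f([T,P])$ is the number of maximal chains in the interval $[T,P]$ of $L$. *)

theory Defs
  imports "HOL-Combinatorics.Combinatorics"
begin

definition prec :: "(nat \<Rightarrow> nat \<Rightarrow> bool) \<Rightarrow> nat \<Rightarrow> nat \<Rightarrow> bool" where
  "prec le x y \<longleftrightarrow> le x y \<and> x \<noteq> y"

definition is_poset :: "nat \<Rightarrow> (nat \<Rightarrow> nat \<Rightarrow> bool) \<Rightarrow> bool" where
  "is_poset n le \<longleftrightarrow>
     (\<forall>x y. le x y \<longrightarrow> x \<in> {1..n} \<and> y \<in> {1..n}) \<and>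
     (\<forall>x\<in>{1..n}. le x x) \<and>
     (\<forall>x y. le x y \<and> le y x \<longrightarrow> x = y) \<and>
     (\<forall>x y z. le x y \<and> le y z \<longrightarrow> le x z)"

definition covers :: "(nat \<Rightarrow> nat \<Rightarrow> bool) \<Rightarrow> nat \<Rightarrow> nat \<Rightarrow> bool" where
  "covers le y x \<longleftrightarrow> prec le x y \<and> \<not> (\<exists>z. prec le x z \<and> prec le z y)"

definition rooted_forest :: "nat \<Rightarrow> (nat \<Rightarrow> nat \<Rightarrow> bool) \<Rightarrow> bool" where
  "rooted_forest n le \<longleftrightarrow> is_poset n le \<and>
     (\<forall>x\<in>{1..n}. \<forall>y1 y2. covers le y1 x \<and> covers le y2 x \<longrightarrow> y1 = y2)"

definition natural_labeling :: "(nat \<Rightarrow> nat \<Rightarrow> bool) \<Rightarrow> bool" where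
  "natural_labeling le \<longleftrightarrow> (\<forall>i j. prec le i j \<longrightarrow> i < j)"

text \<open>A permutation \<pi> of {1..n} in one-line notation: \<pi>_k = \<pi> k.\<close>
definition lin_ext :: "nat \<Rightarrow> (nat \<Rightarrow> nat \<Rightarrow> bool) \<Rightarrow> (nat \<Rightarrow> nat) set" where
  "lin_ext n le = {\<pi>. \<pi> permutes {1..n} \<and>
       (\<forall>i j. prec le i j \<longrightarrow> inv \<pi> i < inv \<pi> j)}"

definition tau :: "(nat \<Rightarrow> nat \<Rightarrow> bool) \<Rightarrow> nat \<Rightarrow> (nat \<Rightarrow> nat) \<Rightarrow> (nat \<Rightarrow> nat)" where
  "tau le i \<pi> = (if \<not> le (\<pi> i) (\<pi> (Suc i)) \<and> \<not> le (\<pi> (Suc i)) (\<pi> i)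
                 then \<pi> \<circ> transpose i (Suc i) else \<pi>)"

text \<open>\<pi>\<partial>_j = \<pi>\<tau>_j\<tau>_{j+1}...\<tau>_{n-1} (operators act on the right).\<close>
definition partial :: "nat \<Rightarrow> (nat \<Rightarrow> nat \<Rightarrow> bool) \<Rightarrow> nat \<Rightarrow> (nat \<Rightarrow> nat) \<Rightarrow> (nat \<Rightarrow> nat)" where
  "partial n le j \<pi> = fold (tau le) [j..<n] \<pi>"

text \<open>Transition matrix of the promotion graph: edges \<pi> \<rightarrow> \<pi>\<partial>_j of weight x_{\<pi>_j}, j \<in> [n].\<close>
definition trans_mat :: "nat \<Rightarrow> (nat \<Rightarrow> nat \<Rightarrow> bool) \<Rightarrow> (nat \<Rightarrow> 'a::comm_ring_1)
    \<Rightarrow> (nat \<Rightarrow> nat) \<Rightarrow> (nat \<Rightarrow> nat) \<Rightarrow> 'a" where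
  "trans_mat n le x \<pi>' \<pi> =
     (if \<pi>' \<noteq> \<pi> then (\<Sum>j\<in>{j\<in>{1..n}. partial n le j \<pi> = \<pi>'}. x (\<pi> j))
      else - (\<Sum>j\<in>{j\<in>{1..n}. partial n le j \<pi> \<noteq> \<pi>}. x (\<pi> j)))"

definition trans_mat_bar :: "nat \<Rightarrow> (nat \<Rightarrow> nat \<Rightarrow> bool) \<Rightarrow> (nat \<Rightarrow> 'a::comm_ring_1)
    \<Rightarrow> (nat \<Rightarrow> nat) \<Rightarrow> (nat \<Rightarrow> nat) \<Rightarrow> 'a" where
  "trans_mat_bar n le x \<pi>' \<pi> =
     trans_mat n le x \<pi>' \<pi> + (if \<pi>' = \<pi> then (\<Sum>i\<in>{1..n}. x i) else 0)"

definition det_on :: "'b set \<Rightarrow> ('b \<Rightarrow> 'b \<Rightarrow> 'a::comm_ring_1) \<Rightarrow> 'a" where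
  "det_on A F = (\<Sum>p\<in>{p. p permutes A}. of_int (sign p) * (\<Prod>i\<in>A. F i (p i)))"

definition upper_sets :: "nat \<Rightarrow> (nat \<Rightarrow> nat \<Rightarrow> bool) \<Rightarrow> nat set set" where
  "upper_sets n le = {S. S \<subseteq> {1..n} \<and> (\<forall>x\<in>S. \<forall>y. le x y \<longrightarrow> y \<in> S)}"

function mobius :: "'a set set \<Rightarrow> 'a set \<Rightarrow> 'a set \<Rightarrow> int" where
  "mobius L S T =
     (if S = T then 1
      else if S \<subset> T \<and> finite T
        then - (\<Sum>U\<in>{U\<in>L. S \<subseteq> U \<and> U \<subset> T}. mobius L S U)
      else 0)"
  by auto
termination
  by (relation "measure (\<lambda>(L,S,T). card T)") (auto intro: psubset_card_mono)

definition lat_interval :: "'a set set \<Rightarrow> 'a set \<Rightarrow> 'a set \<Rightarrow> 'a set set" where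
  "lat_interval L A B = {U\<in>L. A \<subseteq> U \<and> U \<subseteq> B}"

definition is_chain :: "'a set set \<Rightarrow> bool" where
  "is_chain C \<longleftrightarrow> (\<forall>X\<in>C. \<forall>Y\<in>C. X \<subseteq> Y \<or> Y \<subseteq> X)"

definition maximal_chains :: "'a set set \<Rightarrow> 'a set \<Rightarrow> 'a set \<Rightarrow> 'a set set set" where
  "maximal_chains L A B =
     {C. C \<subseteq> lat_interval L A B \<and> is_chain C \<and>
         (\<forall>C'. C \<subseteq> C' \<and> C' \<subseteq> lat_interval L A B \<and> is_chain C' \<longrightarrow> C' = C)}"

definition derangement_number :: "nat \<Rightarrow> (nat \<Rightarrow> nat \<Rightarrow> bool) \<Rightarrow> nat set \<Rightarrow> int" where
  "derangement_number n le S =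
     (let L = upper_sets n le in
      \<Sum>T\<in>{T\<in>L. S \<subseteq> T}. mobius L S T * int (card (maximal_chains L T {1..n})))"

end

theory Submission
  imports Defs "Jordan_Normal_Form.Determinant"
begin

text \<open>
  Linear extensions are handled as words, on which the promotion operator \<open>\<partial>\<^sub>j\<close> removes the
  letter \<open>\<pi>\<^sub>j\<close> and bubbles it to the right past incomparable letters. For an upper set \<open>S\<close> let
  \<open>A\<^sub>S\<close> be the (transposed) promotion matrix on the linear extensions of \<open>S\<close>. Conjugating by the
  unitriangular matrix \<open>Q\<close> whose column \<open>w\<close> records agreement with \<open>w\<close> after its longest ascending
  prefix makes \<open>A\<^sub>S\<close> block triangular. Its blocks are indexed by the first descent letter \<open>a\<close> of a
  word and the upper set \<open>S'\<close> of the letters after it, and each is a copy of \<open>A\<^sub>S\<^sub>'\<close>, except for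
  the \<open>1 \<times> 1\<close> block \<open>x\<^sub>S\<close> of the increasing word. Hence
  \<open>det (\<lambda> - A\<^sub>S) = (\<lambda> - x\<^sub>S) \<Prod>\<^sub>S\<^sub>' det (\<lambda> - A\<^sub>S\<^sub>')\<^bsup>m(S,S')\<^esup>\<close>, where \<open>m(S,S')\<close> counts the
  letters \<open>a \<noteq> max (S - S')\<close> that can be added to \<open>S'\<close>. Unrolling this recursion, the exponent of
  \<open>\<lambda> - x\<^sub>T\<close> satisfies the recursion obeyed by the number of maximal chains of \<open>[T, P]\<close>, and
  Moebius inversion identifies it with the derangement number \<open>d\<^sub>T\<close>.
\<close>

section \<open>Determinants of matrices indexed by finite sets\<close>

lemma det_on_reindex:
  fixes h :: "'b \<Rightarrow> 'c" and F :: "'c \<Rightarrow> 'c \<Rightarrow> 'a::comm_ring_1"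
  assumes h: "bij_betw h X Y" and fin: "finite X"
  shows "det_on Y F = det_on X (\<lambda>x x'. F (h x) (h x'))"
proof -
  have inj: "inj_on h X" using h by (rule bij_betw_imp_inj_on)
  have bij: "bij_betw (map_permutation X h) {p. p permutes X} {p. p permutes Y}"
  proof -
    have "map_permutation X h = (\<lambda>p y. if y \<in> Y then h (p (inv_into X h y)) else y)"
      using h by (auto simp: fun_eq_iff map_permutation_def restrict_id_def bij_betw_def)
    then show ?thesis using bij_betw_permutations[OF h] by simp
  qed
  have "det_on Y F = (\<Sum>p | p permutes X. of_int (sign (map_permutation X h p))
                        * (\<Prod>y\<in>Y. F y (map_permutation X h p y)))"
    unfolding det_on_def by (rule sum.reindex_bij_betw[OF bij, symmetric])
  also have "\<dots> = det_on X (\<lambda>x x'. F (h x) (h x'))"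
    unfolding det_on_def
  proof (rule sum.cong[OF refl])
    fix p assume "p \<in> {p. p permutes X}"
    then have p: "p permutes X" by simp
    have "(\<Prod>y\<in>Y. F y (map_permutation X h p y)) = (\<Prod>x\<in>X. F (h x) (map_permutation X h p (h x)))"
      by (rule prod.reindex_bij_betw[OF h, symmetric])
    also have "\<dots> = (\<Prod>x\<in>X. F (h x) (h (p x)))"
      using inj by (intro prod.cong refl) (simp add: map_permutation_apply)
    finally show "of_int (sign (map_permutation X h p)) * (\<Prod>y\<in>Y. F y (map_permutation X h p y))
        = of_int (sign p) * (\<Prod>x\<in>X. F (h x) (h (p x)))"
      by (simp add: sign_map_permutation[OF inj p fin])
  qed
  finally show ?thesis .
qed

lemma det_on_eq_det_mat:
  "det_on {0..<N} G = det (mat N N (\<lambda>(i,j). G i j))"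
proof -
  have "det (mat N N (\<lambda>(i,j). G i j)) = (\<Sum> p \<in> {p. p permutes {0 ..< N}}.
     signof p * (\<Prod> i = 0 ..< N. mat N N (\<lambda>(i,j). G i j) $$ (i, p i)))"
    by (rule det_def') simp
  also have "\<dots> = det_on {0..<N} G" unfolding det_on_def
  proof (rule sum.cong[OF refl])
    fix p assume "p \<in> {p. p permutes {0..<N}}"
    then have p: "p permutes {0..<N}" by simp
    have "(\<Prod> i = 0 ..< N. mat N N (\<lambda>(i,j). G i j) $$ (i, p i)) = (\<Prod> i = 0 ..< N. G i (p i))"
      by (rule prod.cong[OF refl]) (use p permutes_in_image in auto)
    then show "signof p * (\<Prod> i = 0 ..< N. mat N N (\<lambda>(i,j). G i j) $$ (i, p i)) = of_int (sign p) * (\<Prod>i\<in>{0..<N}. G i (p i))"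
      by simp
  qed
  finally show ?thesis by simp
qed

lemma det_on_mult:
  fixes A B :: "'b \<Rightarrow> 'b \<Rightarrow> 'a::comm_ring_1"
  assumes fin: "finite X"
  shows "det_on X (\<lambda>x z. \<Sum>y\<in>X. A x y * B y z) = det_on X A * det_on X B"
proof -
  obtain e where e: "bij_betw e {0..<card X} X" using ex_bij_betw_nat_finite[OF fin] by blast
  let ?N = "card X"
  have fin_nat: "finite {0..<?N}" by simp
  let ?A = "mat ?N ?N (\<lambda>(i,j). A (e i) (e j))"
  let ?B = "mat ?N ?N (\<lambda>(i,j). B (e i) (e j))"
  have "det_on X (\<lambda>x z. \<Sum>y\<in>X. A x y * B y z) = det_on {0..<?N} (\<lambda>i j. \<Sum>y\<in>X. A (e i) y * B y (e j))"
    by (rule det_on_reindex[OF e]) simp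
  also have "\<dots> = det_on {0..<?N} (\<lambda>i j. \<Sum>k\<in>{0..<?N}. A (e i) (e k) * B (e k) (e j))"
  proof -
    have "\<And>i j. (\<Sum>y\<in>X. A (e i) y * B y (e j)) = (\<Sum>k\<in>{0..<?N}. A (e i) (e k) * B (e k) (e j))"
      by (rule sum.reindex_bij_betw[OF e, symmetric])
    then show ?thesis by simp
  qed
  also have "\<dots> = det (?A * ?B)"
    unfolding det_on_eq_det_mat
    by (rule arg_cong[where f=det]) (auto simp: scalar_prod_def intro!: eq_matI sum.cong)
  also have "\<dots> = det ?A * det ?B" by (rule det_mult) auto
  also have "\<dots> = det_on X A * det_on X B"
    using det_on_reindex[OF e fin_nat, of A] det_on_reindex[OF e fin_nat, of B] det_on_eq_det_mat[of "card X"] by metis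
  finally show ?thesis .
qed

lemma det_on_transpose:
  fixes F :: "'b \<Rightarrow> 'b \<Rightarrow> 'a::comm_ring_1"
  assumes fin: "finite X"
  shows "det_on X (\<lambda>x y. F y x) = det_on X F"
proof -
  obtain e where e: "bij_betw e {0..<card X} X" using ex_bij_betw_nat_finite[OF fin] by blast
  let ?N = "card X"
  have "det_on X (\<lambda>x y. F y x) = det_on {0..<?N} (\<lambda>i j. F (e j) (e i))"
    by (rule det_on_reindex[OF e]) simp
  also have "\<dots> = det (transpose_mat (mat ?N ?N (\<lambda>(i,j). F (e i) (e j))))"
    unfolding det_on_eq_det_mat by (rule arg_cong[where f=det]) auto
  also have "\<dots> = det (mat ?N ?N (\<lambda>(i,j). F (e i) (e j)))" by (rule det_transpose) auto
  also have "\<dots> = det_on X F" unfolding det_on_eq_det_mat[symmetric] by (rule det_on_reindex[OF e, symmetric]) simp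
  finally show ?thesis .
qed

lemma det_on_empty[simp]: "det_on {} F = 1"
  unfolding det_on_def by simp

lemma det_on_singleton[simp]: "det_on {a} F = F a a"
  unfolding det_on_def by (simp add: permutes_sing)

lemma det_on_cong:
  assumes "\<And>x y. x \<in> X \<Longrightarrow> y \<in> X \<Longrightarrow> F x y = G x y"
  shows "det_on X F = det_on X G"
  unfolding det_on_def
proof (rule sum.cong[OF refl])
  fix p assume "p \<in> {p. p permutes X}"
  then have "\<And>x. x \<in> X \<Longrightarrow> p x \<in> X" by (simp add: permutes_in_image)
  then show "of_int (sign p) * (\<Prod>i\<in>X. F i (p i)) = of_int (sign p) * (\<Prod>i\<in>X. G i (p i))"
    using assms by simp
qed

lemma permutes_stabilizer_image:
  assumes fin: "finite X" and YX: "Y \<subseteq> X" and p: "p permutes X" and pY: "p ` Y \<subseteq> Y"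
  shows "p ` Y = Y" "p ` (X - Y) = X - Y"
proof -
  have inj: "inj p" using p by (rule permutes_inj)
  show Y: "p ` Y = Y"
    using endo_inj_surj[OF finite_subset[OF YX fin] pY inj_on_subset[OF inj subset_UNIV]] .
  show "p ` (X - Y) = X - Y"
    using image_set_diff[OF inj] permutes_image[OF p] Y by simp
qed

lemma bij_betw_permutes_stabilizer:
  assumes fin: "finite X" and YX: "Y \<subseteq> X"
  shows "bij_betw (\<lambda>(p, q). p \<circ> q) ({p. p permutes Y} \<times> {q. q permutes X - Y})
           {p. p permutes X \<and> p ` Y \<subseteq> Y}"
proof (rule bij_betw_byWitness[where f' = "\<lambda>p. (restrict_id p Y, restrict_id p (X - Y))"])
  show "\<forall>pq\<in>{p. p permutes Y} \<times> {q. q permutes X - Y}.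
          (restrict_id ((\<lambda>(p, q). p \<circ> q) pq) Y, restrict_id ((\<lambda>(p, q). p \<circ> q) pq) (X - Y)) = pq"
  proof
    fix pq assume "pq \<in> {p. p permutes Y} \<times> {q. q permutes X - Y}"
    then obtain p q where pq: "pq = (p, q)" and p: "p permutes Y" and q: "q permutes X - Y" by auto
    have "restrict_id (p \<circ> q) Y = p" "restrict_id (p \<circ> q) (X - Y) = q"
      using permutes_not_in[OF p] permutes_not_in[OF q] permutes_in_image[OF q]
      by (auto simp: restrict_id_def fun_eq_iff)
    then show "(restrict_id ((\<lambda>(p, q). p \<circ> q) pq) Y, restrict_id ((\<lambda>(p, q). p \<circ> q) pq) (X - Y)) = pq"
      using pq by simp
  qed
  show "\<forall>p\<in>{p. p permutes X \<and> p ` Y \<subseteq> Y}.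
          (\<lambda>(p, q). p \<circ> q) (restrict_id p Y, restrict_id p (X - Y)) = p"
  proof (clarsimp)
    fix p assume p: "p permutes X" and pY: "p ` Y \<subseteq> Y"
    have "p x \<notin> Y" if "x \<in> X - Y" for x
      using permutes_stabilizer_image(2)[OF fin YX p pY] that by blast
    then show "restrict_id p Y \<circ> restrict_id p (X - Y) = p"
      using permutes_not_in[OF p] by (auto simp: restrict_id_def fun_eq_iff)
  qed
  show "(\<lambda>(p, q). p \<circ> q) ` ({p. p permutes Y} \<times> {q. q permutes X - Y})
          \<subseteq> {p. p permutes X \<and> p ` Y \<subseteq> Y}"
  proof
    fix r assume "r \<in> (\<lambda>(p, q). p \<circ> q) ` ({p. p permutes Y} \<times> {q. q permutes X - Y})"
    then obtain p q where r: "r = p \<circ> q" and p: "p permutes Y" and q: "q permutes X - Y" by auto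
    have "p permutes X" "q permutes X" using permutes_subset p q YX by blast+
    then show "r \<in> {p. p permutes X \<and> p ` Y \<subseteq> Y}"
      using r permutes_not_in[OF q] permutes_in_image[OF p] by (auto intro: permutes_compose)
  qed
  show "(\<lambda>p. (restrict_id p Y, restrict_id p (X - Y))) ` {p. p permutes X \<and> p ` Y \<subseteq> Y}
          \<subseteq> {p. p permutes Y} \<times> {q. q permutes X - Y}"
  proof
    fix r assume "r \<in> (\<lambda>p. (restrict_id p Y, restrict_id p (X - Y))) ` {p. p permutes X \<and> p ` Y \<subseteq> Y}"
    then obtain p where r: "r = (restrict_id p Y, restrict_id p (X - Y))"
      and p: "p permutes X" and pY: "p ` Y \<subseteq> Y" by auto
    note img = permutes_stabilizer_image[OF fin YX p pY]
    have inj: "inj p" using p by (rule permutes_inj)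
    have "bij_betw p Y Y" "bij_betw p (X - Y) (X - Y)"
      using img inj_on_subset[OF inj] by (auto simp: bij_betw_def)
    then show "r \<in> {p. p permutes Y} \<times> {q. q permutes X - Y}"
      using r by (auto intro: permutes_restrict_id)
  qed
qed

lemma det_on_block_triangular:
  fixes F :: "'b \<Rightarrow> 'b \<Rightarrow> 'a::comm_ring_1"
  assumes fin: "finite X" and YX: "Y \<subseteq> X"
    and zero: "\<And>y z. y \<in> Y \<Longrightarrow> z \<in> X - Y \<Longrightarrow> F y z = 0"
  shows "det_on X F = det_on Y F * det_on (X - Y) F"
proof -
  define Z where "Z = X - Y"
  have finY: "finite Y" and finZ: "finite Z" using fin YX finite_subset Z_def by auto
  have XYZ: "X = Y \<union> Z" "Y \<inter> Z = {}" using YX Z_def by auto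
  let ?t = "\<lambda>A p. of_int (sign p) * (\<Prod>x\<in>A. F x (p x))"
  have "det_on X F = (\<Sum>p\<in>{p. p permutes X \<and> p ` Y \<subseteq> Y}. ?t X p)"
    unfolding det_on_def
  proof (rule sum.mono_neutral_right)
    show "finite {p. p permutes X}" using fin by (rule finite_permutations)
    show "\<forall>p\<in>{p. p permutes X} - {p. p permutes X \<and> p ` Y \<subseteq> Y}. ?t X p = 0"
    proof
      fix p assume p: "p \<in> {p. p permutes X} - {p. p permutes X \<and> p ` Y \<subseteq> Y}"
      then obtain y where y: "y \<in> Y" "p y \<notin> Y" by auto
      have "p y \<in> X" using p y YX permutes_in_image by fastforce
      then have "(\<Prod>x\<in>X. F x (p x)) = 0" using zero y fin YX by (intro prod_zero) auto
      then show "?t X p = 0" by simp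
    qed
  qed auto
  also have "\<dots> = (\<Sum>pq\<in>{p. p permutes Y} \<times> {q. q permutes Z}. ?t X ((\<lambda>(p, q). p \<circ> q) pq))"
    unfolding Z_def by (rule sum.reindex_bij_betw[OF bij_betw_permutes_stabilizer[OF fin YX], symmetric])
  also have "\<dots> = (\<Sum>(p, q)\<in>{p. p permutes Y} \<times> {q. q permutes Z}. ?t Y p * ?t Z q)"
  proof (rule sum.cong[OF refl], clarsimp)
    fix p q assume p: "p permutes Y" and q: "q permutes Z"
    have "sign (p \<circ> q) = sign p * sign q"
      by (rule sign_compose) (use p q finY finZ permutes_imp_permutation in auto)
    moreover have "(\<Prod>x\<in>X. F x (p (q x))) = (\<Prod>x\<in>Y. F x (p (q x))) * (\<Prod>x\<in>Z. F x (p (q x)))"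
      using XYZ finY finZ by (simp add: prod.union_disjoint)
    moreover have "(\<Prod>x\<in>Y. F x (p (q x))) = (\<Prod>x\<in>Y. F x (p x))"
      using XYZ(2) permutes_not_in[OF q] by (intro prod.cong refl) (metis disjoint_iff)
    moreover have "(\<Prod>x\<in>Z. F x (p (q x))) = (\<Prod>x\<in>Z. F x (q x))"
      using XYZ(2) permutes_not_in[OF p] permutes_in_image[OF q] by (intro prod.cong refl) (metis disjoint_iff)
    ultimately show "of_int (sign (p \<circ> q)) * (\<Prod>x\<in>X. F x (p (q x)))
        = of_int (sign p) * (\<Prod>x\<in>Y. F x (p x)) * (of_int (sign q) * (\<Prod>x\<in>Z. F x (q x)))"
      by (simp add: algebra_simps)
  qed
  also have "\<dots> = det_on Y F * det_on Z F"
    unfolding det_on_def sum_product sum.cartesian_product by (simp add: case_prod_beta)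
  finally show ?thesis unfolding Z_def .
qed

lemma det_on_block_triangular_partition:
  fixes F :: "'b \<Rightarrow> 'b \<Rightarrow> 'a::comm_ring_1" and \<kappa> :: "'b \<Rightarrow> 'k" and ord :: "'k \<Rightarrow> nat"
  assumes "finite X"
    and "\<And>x y. x \<in> X \<Longrightarrow> y \<in> X \<Longrightarrow> \<kappa> x \<noteq> \<kappa> y \<Longrightarrow> ord (\<kappa> y) \<le> ord (\<kappa> x) \<Longrightarrow> F x y = 0"
  shows "det_on X F = (\<Prod>c\<in>\<kappa> ` X. det_on {x\<in>X. \<kappa> x = c} F)"
  using assms
proof (induction "card (\<kappa> ` X)" arbitrary: X rule: less_induct)
  case less
  show ?case
  proof (cases "X = {}")
    case True then show ?thesis by simp
  next
    case False
    let ?K = "\<kappa> ` X"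
    have finK: "finite ?K" using less.prems(1) by simp
    obtain c where c: "c \<in> ?K" "\<And>c'. c' \<in> ?K \<Longrightarrow> ord c' \<le> ord c"
    proof -
      have "ord ` ?K \<noteq> {}" using False by simp
      then have "Max (ord ` ?K) \<in> ord ` ?K" using finK by simp
      then obtain c where "c \<in> ?K" "ord c = Max (ord ` ?K)" by (metis (no_types, lifting) imageE)
      moreover have "\<And>c'. c' \<in> ?K \<Longrightarrow> ord c' \<le> Max (ord ` ?K)" using finK by simp
      ultimately show ?thesis using that by metis
    qed
    define Y where "Y = {x\<in>X. \<kappa> x = c}"
    have two: "det_on X F = det_on Y F * det_on (X - Y) F"
    proof (rule det_on_block_triangular[OF less.prems(1)])
      show "Y \<subseteq> X" unfolding Y_def by auto
      fix y z assume y: "y \<in> Y" and z: "z \<in> X - Y"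
      then have "\<kappa> y \<noteq> \<kappa> z" "ord (\<kappa> z) \<le> ord (\<kappa> y)" using c unfolding Y_def by auto
      then show "F y z = 0" using less.prems(2) y z unfolding Y_def by auto
    qed
    have K': "\<kappa> ` (X - Y) = ?K - {c}" unfolding Y_def by auto
    have "card (\<kappa> ` (X - Y)) < card ?K" unfolding K' using c(1) finK by (meson card_Diff1_less)
    then have IH: "det_on (X - Y) F = (\<Prod>c'\<in>\<kappa> ` (X - Y). det_on {x\<in>X - Y. \<kappa> x = c'} F)"
      using less.hyps[of "X - Y"] less.prems by auto
    have "(\<Prod>c'\<in>\<kappa> ` (X - Y). det_on {x\<in>X - Y. \<kappa> x = c'} F) = (\<Prod>c'\<in>?K - {c}. det_on {x\<in>X. \<kappa> x = c'} F)"
      unfolding K' by (rule prod.cong[OF refl]) (rule arg_cong[where f="\<lambda>A. det_on A F"], auto simp: Y_def)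
    then show ?thesis using two IH c(1) finK Y_def by (simp add: prod.remove)
  qed
qed

lemma det_on_char_similar:
  fixes A B Q :: "'b \<Rightarrow> 'b \<Rightarrow> 'a::comm_ring_1"
  assumes fin: "finite X" and dQ: "det_on X Q = 1"
    and AQ: "\<And>w w'. w \<in> X \<Longrightarrow> w' \<in> X \<Longrightarrow> (\<Sum>v\<in>X. A w v * Q v w') = (\<Sum>v\<in>X. Q w v * B v w')"
  shows "det_on X (\<lambda>w w'. (if w = w' then lam else 0) - A w w')
       = det_on X (\<lambda>w w'. (if w = w' then lam else 0) - B w w')"
proof -
  let ?L1 = "\<lambda>w w'. (if w = w' then lam else 0) - A w w'"
  let ?L2 = "\<lambda>w w'. (if w = w' then lam else 0) - B w w'"
  have eq: "(\<Sum>v\<in>X. ?L1 w v * Q v w') = (\<Sum>v\<in>X. Q w v * ?L2 v w')"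
    if w: "w \<in> X" and w': "w' \<in> X" for w w'
  proof -
    have "?L1 w v * Q v w' = (if w = v then lam * Q v w' else 0) - A w v * Q v w'" for v
      by (simp add: algebra_simps)
    then have "(\<Sum>v\<in>X. ?L1 w v * Q v w') = (\<Sum>v\<in>X. if w = v then lam * Q v w' else 0) - (\<Sum>v\<in>X. A w v * Q v w')"
      by (simp add: sum_subtractf)
    also have "\<dots> = lam * Q w w' - (\<Sum>v\<in>X. A w v * Q v w')" using fin w by simp
    also have "\<dots> = (\<Sum>v\<in>X. if v = w' then Q w v * lam else 0) - (\<Sum>v\<in>X. Q w v * B v w')"
      using fin w' AQ[OF w w'] by (simp add: mult.commute)
    also have "\<dots> = (\<Sum>v\<in>X. Q w v * ?L2 v w')"
    proof -
      have "Q w v * ?L2 v w' = (if v = w' then Q w v * lam else 0) - Q w v * B v w'" for v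
        by (simp add: algebra_simps)
      then show ?thesis by (simp add: sum_subtractf)
    qed
    finally show ?thesis .
  qed
  have "det_on X ?L1 = det_on X ?L1 * det_on X Q" using dQ by simp
  also have "\<dots> = det_on X (\<lambda>w w'. \<Sum>v\<in>X. ?L1 w v * Q v w')" by (rule det_on_mult[OF fin, symmetric])
  also have "\<dots> = det_on X (\<lambda>w w'. \<Sum>v\<in>X. Q w v * ?L2 v w')" by (rule det_on_cong) (rule eq)
  also have "\<dots> = det_on X Q * det_on X ?L2" by (rule det_on_mult[OF fin])
  also have "\<dots> = det_on X ?L2" using dQ by simp
  finally show ?thesis .
qed

section \<open>Words, bubbling and promotion\<close>

fun bubble :: "(nat \<Rightarrow> nat \<Rightarrow> bool) \<Rightarrow> nat list \<Rightarrow> nat list" where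
  "bubble R (a # b # r) = (if R a b \<or> R b a then a # bubble R (b # r) else b # bubble R (a # r))"
| "bubble R r = r"

text \<open>\<open>promote R i w\<close> is \<open>\<pi>\<partial>\<^sub>j\<close> in word form, where \<open>i = \<pi>\<^sub>j\<close> (see \<open>word_of_partial\<close>).\<close>

fun promote :: "(nat \<Rightarrow> nat \<Rightarrow> bool) \<Rightarrow> nat \<Rightarrow> nat list \<Rightarrow> nat list" where
  "promote R i [] = []"
| "promote R i (a # w) = (if a = i then bubble R (a # w) else a # promote R i w)"

definition linext_word :: "(nat \<Rightarrow> nat \<Rightarrow> bool) \<Rightarrow> nat list \<Rightarrow> bool" where
  "linext_word R w \<longleftrightarrow> distinct w \<and> sorted_wrt (\<lambda>a b. \<not> prec R b a) w"

lemma mset_bubble: "mset (bubble R w) = mset w"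
  by (induction R w rule: bubble.induct) auto

lemma length_bubble[simp]: "length (bubble R w) = length w"
  using mset_bubble size_mset by metis

lemma set_bubble[simp]: "set (bubble R w) = set w"
  using mset_bubble set_mset_mset by metis

lemma mset_promote: "mset (promote R i w) = mset w"
  by (induction w) (auto simp: mset_bubble)

lemma length_promote[simp]: "length (promote R i w) = length w"
  using mset_promote size_mset by metis

lemma set_promote[simp]: "set (promote R i w) = set w"
  using mset_promote set_mset_mset by metis

lemma linext_word_bubble: "linext_word R w \<Longrightarrow> linext_word R (bubble R w)"
proof (induction R w rule: bubble.induct)
  case (1 R a b r)
  show ?case
  proof (cases "R a b \<or> R b a")
    case True
    have "linext_word R (b # r)" using 1(3) by (simp add: linext_word_def)
    then have "linext_word R (bubble R (b # r))" using 1(1) True by simp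
    then show ?thesis using True 1(3) by (simp add: linext_word_def)
  next
    case False
    have "linext_word R (a # r)" using 1(3) by (simp add: linext_word_def)
    then have "linext_word R (bubble R (a # r))" using 1(2) False by simp
    moreover have "\<not> prec R a b" using False by (simp add: prec_def)
    ultimately show ?thesis using False 1(3) by (auto simp: linext_word_def)
  qed
qed simp_all

lemma linext_word_append:
  "linext_word R (u @ v) \<longleftrightarrow>
     linext_word R u \<and> linext_word R v \<and> set u \<inter> set v = {} \<and> (\<forall>x\<in>set u. \<forall>y\<in>set v. \<not> prec R y x)"
  by (auto simp: linext_word_def sorted_wrt_append)

lemma linext_word_promote: "linext_word R w \<Longrightarrow> linext_word R (promote R i w)"
proof (induction w)
  case (Cons a w)
  then show ?case using linext_word_bubble[of R "a # w"] by (auto simp: linext_word_def)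
qed simp

lemma promote_append_notin: "i \<notin> set u \<Longrightarrow> promote R i (u @ v) = u @ promote R i v"
  by (induction u) auto

lemma promote_split: "i \<notin> set u \<Longrightarrow> promote R i (u @ i # v) = u @ bubble R (i # v)"
  by (induction u) auto

fun asc_len :: "nat list \<Rightarrow> nat" where
  "asc_len [] = 0"
| "asc_len [a] = 1"
| "asc_len (a # b # r) = (if a < b then Suc (asc_len (b # r)) else 1)"

lemma asc_len_le: "asc_len w \<le> length w"
  by (induction w rule: asc_len.induct) auto

lemma asc_len_pos: "w \<noteq> [] \<Longrightarrow> asc_len w \<ge> 1"
  by (induction w rule: asc_len.induct) auto

lemma sorted_take_asc_len: "sorted_wrt (<) (take (asc_len w) w)"
proof (induction w rule: asc_len.induct)
  case (3 a b r)
  show ?case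
  proof (cases "a < b")
    case True
    have "asc_len (b # r) \<ge> 1" by (rule asc_len_pos) simp
    then obtain k where k: "asc_len (b # r) = Suc k" by (cases "asc_len (b # r)") auto
    have s: "sorted_wrt (<) (b # take k r)" using 3 True k by simp
    then have "\<forall>x\<in>set (take k r). a < x" using True by auto
    then show ?thesis using True k s by simp
  next
    case False then show ?thesis by simp
  qed
qed auto

lemma asc_len_maximal: "k \<le> length w \<Longrightarrow> sorted_wrt (<) (take k w) \<Longrightarrow> k \<le> asc_len w"
proof (induction w arbitrary: k rule: asc_len.induct)
  case (3 a b r)
  show ?case
  proof (cases k)
    case 0 then show ?thesis by simp
  next
    case (Suc k1)
    show ?thesis
    proof (cases k1)
      case 0 then show ?thesis using Suc by simp
    next
      case (Suc k2)
      have "take k (a # b # r) = a # b # take k2 r" using \<open>k = Suc k1\<close> Suc by simp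
      then have ab: "a < b" and st: "sorted_wrt (<) (take k1 (b # r))" using 3(3) Suc by auto
      have "k1 \<le> asc_len (b # r)" using 3(1)[OF ab] st 3(2) \<open>k = Suc k1\<close> by simp
      then show ?thesis using ab \<open>k = Suc k1\<close> by simp
    qed
  qed
qed auto

lemma not_sorted_take_Suc_asc_len:
  assumes "asc_len w < length w" shows "\<not> sorted_wrt (<) (take (Suc (asc_len w)) w)"
  using asc_len_maximal[of "Suc (asc_len w)" w] assms by auto

lemma set_take_eq_Diff_set_drop:
  assumes "distinct v"
  shows "set (take k v) = set v - set (drop k v)"
proof -
  have "set (take k v) \<inter> set (drop k v) = {}"
    using assms by (metis append_take_drop_id distinct_append)
  moreover have "set v = set (take k v) \<union> set (drop k v)"
    by (metis append_take_drop_id set_append)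
  ultimately show ?thesis by blast
qed

definition word_of :: "nat \<Rightarrow> (nat \<Rightarrow> nat) \<Rightarrow> nat list" where
  "word_of n \<pi> = map \<pi> [1..<Suc n]"

lemma nth_word_of: "k \<in> {1..n} \<Longrightarrow> word_of n \<pi> ! (k - 1) = \<pi> k"
proof -
  assume k: "k \<in> {1..n}"
  then have "k - 1 < length [1..<Suc n]" by auto
  then have "map \<pi> [1..<Suc n] ! (k - 1) = \<pi> ([1..<Suc n] ! (k - 1))" by (rule nth_map)
  also have "[1..<Suc n] ! (k - 1) = k" using k by (subst nth_upt) auto
  finally show ?thesis unfolding word_of_def .
qed

lemma length_word_of[simp]: "length (word_of n \<pi>) = n"
  unfolding word_of_def by simp

lemma fold_tau_outside:
  "(\<forall>i\<in>set l. 1 \<le> i \<and> Suc i \<le> n) \<Longrightarrow> k \<notin> {1..n} \<Longrightarrow> fold (tau R) l \<pi> k = \<pi> k"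
proof (induction l arbitrary: \<pi>)
  case (Cons i l)
  have "fold (tau R) (i # l) \<pi> k = fold (tau R) l (tau R i \<pi>) k" by simp
  also have "\<dots> = tau R i \<pi> k" using Cons by simp
  also have "\<dots> = \<pi> k" using Cons.prems
    by (auto simp: tau_def Transposition.transpose_def)
  finally show ?case .
qed simp

lemma word_fold_tau:
  assumes "1 \<le> j" "j \<le> n"
  shows "map (fold (tau R) [j..<n] \<pi>) [1..<Suc n] = map \<pi> [1..<j] @ bubble R (map \<pi> [j..<Suc n])"
  using assms
proof (induction "n - j" arbitrary: j \<pi>)
  case 0
  then have jn: "j = n" by simp
  have "[1..<Suc n] = [1..<n] @ [n]" using 0 by simp
  then show ?case using jn by simp
next
  case (Suc m)
  then have jn: "j < n" by simp
  let ?M = "map \<pi> [Suc (Suc j)..<Suc n]"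
  have up1: "[j..<n] = j # [Suc j..<n]" using jn by (simp add: upt_conv_Cons)
  have up2: "[j..<Suc n] = j # Suc j # [Suc (Suc j)..<Suc n]" using jn by (simp add: upt_conv_Cons)
  have up3: "[Suc j..<Suc n] = Suc j # [Suc (Suc j)..<Suc n]" using jn by (simp add: upt_conv_Cons)
  have up4: "[1..<Suc j] = [1..<j] @ [j]" using Suc.prems by simp
  let ?p = "tau R j \<pi>"
  have IH: "map (fold (tau R) [Suc j..<n] ?p) [1..<Suc n] = map ?p [1..<Suc j] @ bubble R (map ?p [Suc j..<Suc n])"
    using Suc.hyps(1)[of "Suc j" ?p] Suc.hyps(2) jn by simp
  have lhs: "fold (tau R) [j..<n] \<pi> = fold (tau R) [Suc j..<n] ?p" using up1 by simp
  show ?case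
  proof (cases "\<not> R (\<pi> j) (\<pi> (Suc j)) \<and> \<not> R (\<pi> (Suc j)) (\<pi> j)")
    case True
    have p: "?p = \<pi> \<circ> Transposition.transpose j (Suc j)" using True by (simp add: tau_def)
    have a: "map ?p [1..<j] = map \<pi> [1..<j]" unfolding p by (rule map_cong) (auto simp: Transposition.transpose_def)
    have b: "map ?p [Suc (Suc j)..<Suc n] = ?M" unfolding p by (rule map_cong) (auto simp: Transposition.transpose_def)
    have "map ?p [1..<Suc j] = map \<pi> [1..<j] @ [\<pi> (Suc j)]" using a up4 p by simp
    moreover have "map ?p [Suc j..<Suc n] = \<pi> j # ?M" using b up3 p by simp
    moreover have "bubble R (map \<pi> [j..<Suc n]) = \<pi> (Suc j) # bubble R (\<pi> j # ?M)" using up2 True by simp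
    ultimately show ?thesis using IH lhs by simp
  next
    case False
    have p: "?p = \<pi>" using False by (auto simp: tau_def)
    have "bubble R (map \<pi> [j..<Suc n]) = \<pi> j # bubble R (\<pi> (Suc j) # ?M)" using up2 False by auto
    then show ?thesis using IH lhs p up3 up4 by simp
  qed
qed

lemma chain_has_greatest:
  assumes fin: "finite C" and ne: "C \<noteq> {}" and ch: "is_chain C" and finE: "\<forall>X\<in>C. finite X"
  shows "\<exists>M\<in>C. \<forall>X\<in>C. X \<subseteq> M"
proof -
  have f2: "finite (card ` C)" using fin by simp
  have n2: "card ` C \<noteq> {}" using ne by simp
  have "Max (card ` C) \<in> card ` C" using Max_in[OF f2 n2] .
  then obtain M where M1: "M \<in> C" and M2: "card M = Max (card ` C)" by auto
  have "\<forall>X\<in>C. card X \<le> card M" using M2 f2 by simp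
  note M = M1 this
  have "\<forall>X\<in>C. X \<subseteq> M"
  proof
    fix X assume X: "X \<in> C"
    show "X \<subseteq> M"
    proof (rule ccontr)
      assume "\<not> X \<subseteq> M"
      then have "M \<subset> X" using ch X M(1) unfolding is_chain_def by blast
      then have "card M < card X" using finE X by (simp add: psubset_card_mono)
      then show False using M(2) X by force
    qed
  qed
  then show ?thesis using M(1) by blast
qed

section \<open>Upper sets of a naturally labelled rooted forest\<close>

locale natural_rooted_forest =
  fixes n :: nat and R :: "nat \<Rightarrow> nat \<Rightarrow> bool"
  assumes rf: "rooted_forest n R" and nl: "natural_labeling R"
begin

lemma R_range: "R x y \<Longrightarrow> x \<in> {1..n} \<and> y \<in> {1..n}"
  using rf unfolding rooted_forest_def is_poset_def by blast

lemma R_refl: "x \<in> {1..n} \<Longrightarrow> R x x"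
  using rf unfolding rooted_forest_def is_poset_def by blast

lemma R_antisym: "R x y \<Longrightarrow> R y x \<Longrightarrow> x = y"
  using rf unfolding rooted_forest_def is_poset_def by blast

lemma R_trans: "R x y \<Longrightarrow> R y z \<Longrightarrow> R x z"
  using rf unfolding rooted_forest_def is_poset_def by blast

lemma prec_less: "prec R x y \<Longrightarrow> x < y"
  using nl unfolding natural_labeling_def by blast

lemma R_le: "R x y \<Longrightarrow> x \<le> y"
  using prec_less[of x y] unfolding prec_def by force

lemma covers_unique: "x \<in> {1..n} \<Longrightarrow> covers R y1 x \<Longrightarrow> covers R y2 x \<Longrightarrow> y1 = y2"
  using rf unfolding rooted_forest_def by blast

lemma exists_cover_below:
  assumes "prec R x v"
  shows "\<exists>c. covers R c x \<and> R c v"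
proof -
  define A where "A = {u. prec R x u \<and> R u v}"
  have "A \<subseteq> {1..n}" unfolding A_def prec_def using R_range by blast
  then have finA: "finite A" by (rule finite_subset) simp
  have "v \<in> A" using assms R_range R_refl unfolding A_def prec_def by blast
  then have ne: "A \<noteq> {}" by auto
  define c where "c = Min A"
  have cA: "c \<in> A" using finA ne c_def by simp
  have "covers R c x" unfolding covers_def
  proof
    show "prec R x c" using cA A_def by simp
    show "\<not> (\<exists>z. prec R x z \<and> prec R z c)"
    proof
      assume "\<exists>z. prec R x z \<and> prec R z c"
      then obtain u where u: "prec R x u" "prec R u c" by auto
      have "R u v" using u(2) cA R_trans unfolding A_def prec_def by blast
      then have "u \<in> A" using u(1) A_def by simp
      then have "c \<le> u" using finA c_def by simp
      moreover have "u < c" using prec_less u(2) by simp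
      ultimately show False by simp
    qed
  qed
  then show ?thesis using cA A_def by auto
qed

lemma above_comparable: "R x y \<Longrightarrow> R x z \<Longrightarrow> R y z \<or> R z y"
proof (induction "n - x" arbitrary: x rule: less_induct)
  case less
  show ?case
  proof (cases "y = x \<or> z = x")
    case True then show ?thesis using less.prems by auto
  next
    case False
    then have pxy: "prec R x y" and pxz: "prec R x z" using less.prems by (auto simp: prec_def)
    obtain c1 where c1: "covers R c1 x" "R c1 y" using exists_cover_below[OF pxy] by auto
    obtain c2 where c2: "covers R c2 x" "R c2 z" using exists_cover_below[OF pxz] by auto
    have xn: "x \<in> {1..n}" using R_range less.prems(1) by blast
    have "c1 = c2" using covers_unique[OF xn c1(1) c2(1)] .
    moreover have "n - c1 < n - x"
    proof -
      have "x < c1" using c1(1) prec_less unfolding covers_def by blast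
      moreover have "c1 \<le> n" using R_range c1(2) by auto
      ultimately show ?thesis by simp
    qed
    ultimately show ?thesis using less.hyps c1(2) c2(2) by metis
  qed
qed

abbreviation "Up \<equiv> upper_sets n R"

lemma Up_subset: "S \<in> Up \<Longrightarrow> S \<subseteq> {1..n}"
  unfolding upper_sets_def by auto

lemma Up_finite: "S \<in> Up \<Longrightarrow> finite S"
  using Up_subset finite_subset by blast

lemma Up_closed: "S \<in> Up \<Longrightarrow> x \<in> S \<Longrightarrow> R x y \<Longrightarrow> y \<in> S"
  unfolding upper_sets_def by auto

lemma Up_top: "{1..n} \<in> Up"
  unfolding upper_sets_def using R_range by auto

lemma Up_empty: "{} \<in> Up"
  unfolding upper_sets_def by auto

definition words :: "nat set \<Rightarrow> nat list set" where
  "words S = {w. linext_word R w \<and> set w = S}"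

lemma finite_words: "finite S \<Longrightarrow> finite (words S)"
proof -
  assume "finite S"
  have "words S \<subseteq> permutations_of_set S" unfolding words_def permutations_of_set_def linext_word_def by auto
  then show ?thesis by (rule finite_subset) simp
qed

lemma sorted_linext_word: "sorted_wrt (<) w \<Longrightarrow> linext_word R w"
proof -
  assume a: "sorted_wrt (<) w"
  then have "distinct w" by (simp add: strict_sorted_iff)
  moreover have "sorted_wrt (\<lambda>a b. \<not> prec R b a) w"
    using a by (rule sorted_wrt_mono_rel[rotated]) (use prec_less in force)
  ultimately show ?thesis unfolding linext_word_def by simp
qed

lemma suffix_in_Up:
  assumes "S \<in> Up" "linext_word R (u @ v)" "set (u @ v) = S"
  shows "set v \<in> Up"
  unfolding upper_sets_def
proof (intro CollectI conjI ballI allI impI)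
  show "set v \<subseteq> {1..n}" using assms Up_subset by auto
  fix x y assume x: "x \<in> set v" and xy: "R x y"
  have yS: "y \<in> S" using Up_closed[OF assms(1)] x xy assms(3) by auto
  show "y \<in> set v"
  proof (rule ccontr)
    assume "y \<notin> set v"
    then have "y \<in> set u" using yS assms(3) by auto
    then have "\<not> prec R x y" using assms(2) x by (auto simp: linext_word_append)
    moreover have "x \<noteq> y" using \<open>y \<notin> set v\<close> x by auto
    ultimately show False using xy by (simp add: prec_def)
  qed
qed

definition top_above :: "nat \<Rightarrow> nat set \<Rightarrow> nat" where
  "top_above c S' = Max ({z. R c z} - S')"

lemma finite_above: "finite {z. R c z}"
proof -
  have "{z. R c z} \<subseteq> {1..n}" using R_range by blast
  then show ?thesis by (rule finite_subset) simp
qed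

lemma top_above_eq:
  assumes Rcb: "R c b" and bS: "b \<notin> S'"
  shows "top_above b S' = top_above c S'"
proof -
  let ?A = "{z. R c z} - S'" and ?B = "{z. R b z} - S'"
  have bn: "b \<in> {1..n}" using R_range Rcb by blast
  have finA: "finite ?A" using finite_above by simp
  have BA: "?B \<subseteq> ?A" using Rcb R_trans by blast
  have bB: "b \<in> ?B" using R_refl bn bS by simp
  then have neA: "?A \<noteq> {}" using BA by auto
  define M where "M = Max ?A"
  have MA: "M \<in> ?A" unfolding M_def by (rule Max_in[OF finA neA])
  have bM: "b \<le> M" using bB BA finA M_def by auto
  have "R b M"
  proof -
    have "R M b \<or> R b M" using above_comparable[of c M b] MA Rcb by simp
    moreover have "R M b \<Longrightarrow> M = b" using R_le bM by force
    ultimately show ?thesis using R_refl bn by auto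
  qed
  then have MB: "M \<in> ?B" using MA by simp
  have "Max ?B = M"
  proof (rule antisym)
    show "Max ?B \<le> M" unfolding M_def by (rule Max_mono[OF BA]) (use bB finA in auto)
    show "M \<le> Max ?B" using MB finA BA finite_subset by (meson Max_ge)
  qed
  then show ?thesis unfolding top_above_def M_def by simp
qed

lemma top_above_self:
  assumes "c \<in> {1..n}" "c \<notin> S'" "\<forall>y. prec R c y \<longrightarrow> y \<in> S'"
  shows "top_above c S' = c"
proof -
  have "{z. R c z} - S' = {c}"
    using assms R_refl by (auto simp: prec_def)
  then show ?thesis unfolding top_above_def by simp
qed

lemma bubble_past_prefix:
  assumes "linext_word R (c # rr @ t)" "set t = S'" "c \<notin> S'" "set rr \<inter> S' = {}" "c \<in> {1..n}"
    "\<forall>y. prec R c y \<and> y \<notin> S' \<longrightarrow> y \<in> set rr"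
  shows "\<exists>r'. bubble R (c # rr @ t) = r' @ bubble R (top_above c S' # t) \<and> length r' = length rr"
  using assms
proof (induction rr arbitrary: c)
  case Nil
  then show ?case using top_above_self[of c S'] by simp
next
  case (Cons b rr)
  have lx: "linext_word R (c # b # rr @ t)" using Cons.prems(1) by simp
  have ncb: "\<not> prec R b c" and cb: "c \<noteq> b" using lx by (auto simp: linext_word_def)
  have bS: "b \<notin> S'" using Cons.prems(4) by auto
  show ?case
  proof (cases "R c b \<or> R b c")
    case True
    have Rcb: "R c b" using True ncb cb by (auto simp: prec_def)
    have bn: "b \<in> {1..n}" using R_range Rcb by blast
    have lb: "linext_word R (b # rr @ t)" using lx by (simp add: linext_word_def)
    have anc: "\<forall>y. prec R b y \<and> y \<notin> S' \<longrightarrow> y \<in> set rr"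
    proof (intro allI impI)
      fix y assume y: "prec R b y \<and> y \<notin> S'"
      have "R c y" using Rcb y R_trans unfolding prec_def by blast
      moreover have "y \<noteq> c" using y Rcb R_antisym cb unfolding prec_def by blast
      ultimately have "prec R c y" by (simp add: prec_def)
      then have "y \<in> set (b # rr)" using Cons.prems(6) y by blast
      then show "y \<in> set rr" using y by (auto simp: prec_def)
    qed
    obtain r'' where r'': "bubble R (b # rr @ t) = r'' @ bubble R (top_above b S' # t)" "length r'' = length rr"
      using Cons.IH[OF lb Cons.prems(2) bS _ bn anc] Cons.prems(4) by auto
    then show ?thesis using True top_above_eq[OF Rcb bS] by auto
  next
    case False
    have lc: "linext_word R (c # rr @ t)" using lx by (simp add: linext_word_def)
    have anc: "\<forall>y. prec R c y \<and> y \<notin> S' \<longrightarrow> y \<in> set rr"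
    proof (intro allI impI)
      fix y assume y: "prec R c y \<and> y \<notin> S'"
      then have "y \<in> set (b # rr)" using Cons.prems(6) by blast
      moreover have "y \<noteq> b" using y False by (auto simp: prec_def)
      ultimately show "y \<in> set rr" by simp
    qed
    obtain r'' where r'': "bubble R (c # rr @ t) = r'' @ bubble R (top_above c S' # t)" "length r'' = length rr"
      using Cons.IH[OF lc Cons.prems(2,3) _ Cons.prems(5) anc] Cons.prems(4) by auto
    then show ?thesis using False by (intro exI[of _ "b # r''"]) auto
  qed
qed

lemma promote_out_of_suffix:
  assumes S: "S \<in> Up" and w: "w \<in> words S" and i: "i \<in> set w" and wut: "w = u @ t" and it: "i \<notin> set t"
  shows "\<exists>r'. promote R i w = r' @ bubble R (top_above i (set t) # t) \<and> Suc (length r') = length u"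
proof -
  have iu: "i \<in> set u" using i it wut by auto
  obtain u1 u2 where u12: "u = u1 @ i # u2" "i \<notin> set u1" using split_list_first[OF iu] by auto
  have lw: "linext_word R w" and sw: "set w = S" using w by (auto simp: words_def)
  have promote_w: "promote R i w = u1 @ bubble R (i # u2 @ t)" using promote_split[OF u12(2)] wut u12(1) by simp
  have l2: "linext_word R (i # u2 @ t)" using lw wut u12(1) linext_word_append[of R u1 "i # u2 @ t"] by simp
  have dis: "set u2 \<inter> set t = {}" using lw wut u12(1) by (auto simp: linext_word_def)
  have iN: "i \<in> {1..n}" using i sw Up_subset[OF S] by blast
  have anc: "\<forall>y. prec R i y \<and> y \<notin> set t \<longrightarrow> y \<in> set u2"
  proof (intro allI impI)
    fix y assume y: "prec R i y \<and> y \<notin> set t"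
    have "y \<in> S" using Up_closed[OF S] i sw y by (auto simp: prec_def)
    then have "y \<in> set u1 \<or> y = i \<or> y \<in> set u2" using sw wut u12(1) y by auto
    moreover have "y \<noteq> i" using y by (simp add: prec_def)
    moreover have "y \<notin> set u1"
      using lw wut u12(1) linext_word_append[of R u1 "i # u2 @ t"] y by auto
    ultimately show "y \<in> set u2" by blast
  qed
  obtain r'' where r'': "bubble R (i # u2 @ t) = r'' @ bubble R (top_above i (set t) # t)" "length r'' = length u2"
    using bubble_past_prefix[OF l2 refl it dis iN anc] by auto
  show ?thesis using promote_w r'' u12(1) by (intro exI[of _ "u1 @ r''"]) simp
qed

text \<open>The word ending in \<open>s\<close> whose other letters increase; if \<open>breaks_asc S s\<close>, its longest
  ascending prefix ends right before \<open>s\<close>.\<close>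

definition canon_word :: "nat set \<Rightarrow> nat list \<Rightarrow> nat list" where
  "canon_word S s = sorted_list_of_set (S - set s) @ s"

definition valid_suffix :: "nat set \<Rightarrow> nat list \<Rightarrow> bool" where
  "valid_suffix S s \<longleftrightarrow> linext_word R s \<and> set s \<in> Up \<and> set s \<subseteq> S"

definition breaks_asc :: "nat set \<Rightarrow> nat list \<Rightarrow> bool" where
  "breaks_asc S s \<longleftrightarrow> s \<noteq> [] \<and> (\<exists>b \<in> S - set s. hd s < b)"

lemma length_words: "v \<in> words S \<Longrightarrow> length v = card S"
  unfolding words_def linext_word_def using distinct_card by fastforce

lemma valid_suffix_drop: "S \<in> Up \<Longrightarrow> v \<in> words S \<Longrightarrow> valid_suffix S (drop k v)"
proof -
  assume S: "S \<in> Up" and v: "v \<in> words S"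
  have lv: "linext_word R (take k v @ drop k v)" "set (take k v @ drop k v) = S" using v by (auto simp: words_def)
  show ?thesis unfolding valid_suffix_def
    using suffix_in_Up[OF S lv] lv linext_word_append[of R "take k v" "drop k v"] by (auto dest: in_set_dropD)
qed

lemma canon_word_words: assumes S: "S \<in> Up" and vs: "valid_suffix S s" shows "canon_word S s \<in> words S"
proof -
  have finS: "finite S" using Up_finite[OF S] .
  let ?p = "sorted_list_of_set (S - set s)"
  have sp: "sorted_wrt (<) ?p" by simp
  have setp: "set ?p = S - set s" using finS by simp
  have "linext_word R ?p" using sorted_linext_word[OF sp] .
  moreover have "linext_word R s" using vs valid_suffix_def by simp
  moreover have "\<forall>x\<in>set ?p. \<forall>y\<in>set s. \<not> prec R y x"
  proof (intro ballI notI)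
    fix x y assume x: "x \<in> set ?p" and y: "y \<in> set s" and p: "prec R y x"
    have "x \<in> set s" using Up_closed[of "set s" y x] vs y p by (auto simp: valid_suffix_def prec_def)
    then show False using x setp by simp
  qed
  ultimately have "linext_word R (canon_word S s)" unfolding canon_word_def using setp by (subst linext_word_append) auto
  moreover have "set (canon_word S s) = S" unfolding canon_word_def using setp vs valid_suffix_def by auto
  ultimately show ?thesis unfolding words_def by simp
qed

lemma length_canon_word_prefix: assumes S: "S \<in> Up" and vs: "valid_suffix S s"
  shows "length (sorted_list_of_set (S - set s)) = card S - length s"
proof -
  have finS: "finite S" using Up_finite[OF S] .
  have "distinct s" using vs by (simp add: valid_suffix_def linext_word_def)
  then have "card (set s) = length s" by (simp add: distinct_card)
  moreover have "set s \<subseteq> S" using vs valid_suffix_def by simp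
  ultimately show ?thesis using finS by (simp add: card_Diff_subset finite_subset)
qed

lemma drop_canon_word: assumes S: "S \<in> Up" and vs: "valid_suffix S s"
  shows "drop (card S - length s) (canon_word S s) = s"
  unfolding canon_word_def using length_canon_word_prefix[OF S vs] by (metis append_eq_conv_conj)

lemma asc_len_canon_word: assumes S: "S \<in> Up" and vs: "valid_suffix S s" and nr: "breaks_asc S s"
  shows "asc_len (canon_word S s) = card S - length s"
proof -
  have finS: "finite S" using Up_finite[OF S] .
  let ?p = "sorted_list_of_set (S - set s)"
  let ?k = "card S - length s"
  have lp: "length ?p = ?k" using length_canon_word_prefix[OF S vs] .
  have "?k \<le> asc_len (canon_word S s)"
    by (rule asc_len_maximal) (use lp in \<open>auto simp: canon_word_def\<close>)
  moreover have "\<not> Suc ?k \<le> asc_len (canon_word S s)"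
  proof
    assume a: "Suc ?k \<le> asc_len (canon_word S s)"
    have "sorted_wrt (<) (take (Suc ?k) (take (asc_len (canon_word S s)) (canon_word S s)))"
      using sorted_take_asc_len sorted_wrt_take by blast
    then have st: "sorted_wrt (<) (take (Suc ?k) (canon_word S s))" using a by (simp add: min_def)
    obtain a0 s' where s: "s = a0 # s'" using nr breaks_asc_def by (cases s) auto
    have "take (Suc ?k) (canon_word S s) = ?p @ [a0]" unfolding canon_word_def using lp s by simp
    then have "\<forall>x\<in>set ?p. x < a0" using st by (simp add: sorted_wrt_append)
    moreover obtain b where "b \<in> S - set s" "hd s < b" using nr breaks_asc_def by auto
    ultimately have "b < a0" using s finS by auto
    then show False using \<open>hd s < b\<close> s by simp
  qed
  ultimately show ?thesis by simp
qed

lemma asc_len_canon_word_Nil: assumes S: "S \<in> Up" shows "asc_len (canon_word S []) = card S"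
proof -
  have finS: "finite S" using Up_finite[OF S] .
  have "card S \<le> asc_len (canon_word S [])" by (rule asc_len_maximal) (use finS in \<open>auto simp: canon_word_def\<close>)
  moreover have "asc_len (canon_word S []) \<le> card S" using asc_len_le[of "canon_word S []"] finS by (simp add: canon_word_def)
  ultimately show ?thesis by simp
qed

lemma canon_word_drop_asc_len: assumes S: "S \<in> Up" and v: "v \<in> words S" shows "canon_word S (drop (asc_len v) v) = v"
proof -
  have finS: "finite S" using Up_finite[OF S] .
  have lv: "linext_word R v" "set v = S" using v words_def by auto
  have dis: "distinct v" using lv linext_word_def by simp
  have "set (take (asc_len v) v) = S - set (drop (asc_len v) v)"
    using set_take_eq_Diff_set_drop[OF dis] lv(2) by simp
  moreover have "sorted_wrt (<) (take (asc_len v) v)" by (rule sorted_take_asc_len)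
  ultimately have "take (asc_len v) v = sorted_list_of_set (S - set (drop (asc_len v) v))"
    using finS by (metis sorted_list_of_set_unique finite_Diff strict_sorted_iff distinct_card)
  then show ?thesis unfolding canon_word_def by (metis append_take_drop_id)
qed

lemma breaks_asc_drop: assumes S: "S \<in> Up" and v: "v \<in> words S" and lt: "asc_len v < length v"
  shows "breaks_asc S (drop (asc_len v) v)"
proof -
  have lv: "linext_word R v" "set v = S" using v words_def by auto
  have dis: "distinct v" using lv linext_word_def by simp
  have ns: "\<not> sorted_wrt (<) (take (Suc (asc_len v)) v)" using not_sorted_take_Suc_asc_len[OF lt] .
  have "take (Suc (asc_len v)) v = take (asc_len v) v @ [v ! asc_len v]" using lt by (simp add: take_Suc_conv_app_nth)
  then obtain x where x: "x \<in> set (take (asc_len v) v)" "\<not> x < v ! asc_len v"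
    using ns sorted_take_asc_len[of v] by (auto simp: sorted_wrt_append)
  have vd: "v ! asc_len v \<in> set (drop (asc_len v) v)" using lt by (metis Cons_nth_drop_Suc list.set_intros(1))
  have dj: "set (take (asc_len v) v) \<inter> set (drop (asc_len v) v) = {}" using dis
    by (metis append_take_drop_id distinct_append)
  have "x \<noteq> v ! asc_len v" using x(1) vd dj by auto
  then have "v ! asc_len v < x" using x(2) by simp
  moreover have "x \<in> S - set (drop (asc_len v) v)" using x(1) dis lv(2)
    by (metis DiffI append_take_drop_id disjoint_iff distinct_append in_set_takeD)
  moreover have "hd (drop (asc_len v) v) = v ! asc_len v" using lt by (simp add: hd_drop_conv_nth)
  ultimately show ?thesis unfolding breaks_asc_def using lt by auto
qed

section \<open>Block triangularisation of the promotion matrix\<close>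

text \<open>Entry \<open>(w, w')\<close> is the total weight of the promotion edges \<open>w \<rightarrow> w'\<close>, so this is the
  transpose of the restriction of \<open>M + (x\<^sub>1 + \<dots> + x\<^sub>n) 1\<close> to the letters of \<open>S\<close>.\<close>

definition prom_mat :: "nat set \<Rightarrow> (nat \<Rightarrow> 'a::comm_ring_1) \<Rightarrow> nat list \<Rightarrow> nat list \<Rightarrow> 'a" where
  "prom_mat S x w w' = (\<Sum>i\<in>{i\<in>S. promote R i w = w'}. x i)"

definition char_det :: "nat set \<Rightarrow> (nat \<Rightarrow> 'a::comm_ring_1) \<Rightarrow> 'a \<Rightarrow> 'a" where
  "char_det S x lam = det_on (words S) (\<lambda>w w'. (if w = w' then lam else 0) - prom_mat S x w w')"

text \<open>The change of basis: column \<open>w'\<close> marks the words that agree with \<open>w'\<close> after the longest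
  ascending prefix of \<open>w'\<close>; it is unitriangular with respect to \<open>asc_len\<close>.\<close>

definition suffix_mat :: "nat list \<Rightarrow> nat list \<Rightarrow> 'a::comm_ring_1" where
  "suffix_mat v w' = of_bool (drop (asc_len w') v = drop (asc_len w') w')"

text \<open>A word belongs to the block of its first descent letter and the set of letters after it;
  the increasing word forms the block \<open>None\<close>.\<close>

definition block_key :: "nat list \<Rightarrow> (nat \<times> nat set) option" where
  "block_key v = (if asc_len v = length v then None else Some (v ! asc_len v, set (drop (Suc (asc_len v)) v)))"

fun block_rank :: "(nat \<times> nat set) option \<Rightarrow> nat" where
  "block_rank None = 0"
| "block_rank (Some (a, S0)) = Suc (card S0)"

lemma promote_words: "w \<in> words S \<Longrightarrow> promote R i w \<in> words S"
  unfolding words_def using linext_word_promote by auto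

lemma distinct_words: "v \<in> words S \<Longrightarrow> distinct v"
  unfolding words_def linext_word_def by simp

lemma block_rank_block_key: assumes S: "S \<in> Up" and v: "v \<in> words S" shows "block_rank (block_key v) = card S - asc_len v"
proof (cases "asc_len v = length v")
  case True then show ?thesis using length_words[OF v] by (simp add: block_key_def)
next
  case False
  then have lt: "asc_len v < length v" using asc_len_le[of v] by simp
  have "card (set (drop (Suc (asc_len v)) v)) = length v - Suc (asc_len v)"
    using distinct_words[OF v] by (simp add: distinct_card)
  then show ?thesis using False lt length_words[OF v] by (simp add: block_key_def)
qed

lemma prom_mat_sum:
  fixes g :: "nat list \<Rightarrow> 'a::comm_ring_1"
  assumes S: "S \<in> Up" and w: "w \<in> words S"
  shows "(\<Sum>v\<in>words S. prom_mat S x w v * g v) = (\<Sum>i\<in>S. x i * g (promote R i w))"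
proof -
  have finW: "finite (words S)" using finite_words Up_finite S by blast
  have finS: "finite S" using Up_finite S by blast
  have "(\<Sum>v\<in>words S. prom_mat S x w v * g v) = (\<Sum>v\<in>words S. \<Sum>i\<in>S. (if promote R i w = v then x i * g v else 0))"
  proof (rule sum.cong[OF refl])
    fix v
    have "prom_mat S x w v * g v = (\<Sum>i\<in>{i\<in>S. promote R i w = v}. x i * g v)"
      unfolding prom_mat_def by (simp add: sum_distrib_right)
    also have "\<dots> = (\<Sum>i\<in>S. (if promote R i w = v then x i * g v else 0))"
      using finS by (rule sum.inter_filter)
    finally show "prom_mat S x w v * g v = (\<Sum>i\<in>S. (if promote R i w = v then x i * g v else 0))" .
  qed
  also have "\<dots> = (\<Sum>i\<in>S. \<Sum>v\<in>words S. (if promote R i w = v then x i * g v else 0))"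
    by (rule sum.swap)
  also have "\<dots> = (\<Sum>i\<in>S. x i * g (promote R i w))"
    using finW promote_words[OF w] by (intro sum.cong refl) (simp add: sum.delta)
  finally show ?thesis .
qed

lemma suffix_mat_asc_len_less: assumes S: "S \<in> Up" and v: "v \<in> words S" and w: "w \<in> words S"
  and q: "drop (asc_len w) v = drop (asc_len w) w" and ne: "v \<noteq> w"
  shows "asc_len v < asc_len w"
proof (rule ccontr)
  assume "\<not> asc_len v < asc_len w"
  then have le: "asc_len w \<le> asc_len v" by simp
  have "sorted_wrt (<) (take (asc_len w) (take (asc_len v) v))" using sorted_take_asc_len sorted_wrt_take by blast
  then have s1: "sorted_wrt (<) (take (asc_len w) v)" using le by (simp add: min_def)
  have s2: "sorted_wrt (<) (take (asc_len w) w)" by (rule sorted_take_asc_len)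
  have dv: "distinct v" and dw: "distinct w" using distinct_words v w by auto
  have sv: "set v = S" and sw: "set w = S" using v w by (auto simp: words_def)
  have "set (take (asc_len w) v) = S - set (drop (asc_len w) v)"
    using set_take_eq_Diff_set_drop[OF dv] sv by simp
  moreover have "set (take (asc_len w) w) = S - set (drop (asc_len w) w)"
    using set_take_eq_Diff_set_drop[OF dw] sw by simp
  ultimately have "take (asc_len w) v = take (asc_len w) w"
    using s1 s2 q by (metis sorted_distinct_set_unique strict_sorted_iff)
  then have "v = w" using q by (metis append_take_drop_id)
  then show False using ne by simp
qed

lemma det_suffix_mat: assumes S: "S \<in> Up" shows "det_on (words S) suffix_mat = (1::'a::comm_ring_1)"
proof -
  have finW: "finite (words S)" using finite_words Up_finite S by blast
  have z: "(suffix_mat :: _ \<Rightarrow> _ \<Rightarrow> 'a) v w = 0" if v: "v \<in> words S" and w: "w \<in> words S" and ne: "v \<noteq> w" and o: "asc_len w \<le> asc_len v" for v w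
  proof (rule ccontr)
    assume "(suffix_mat :: _ \<Rightarrow> _ \<Rightarrow> 'a) v w \<noteq> 0"
    then have "drop (asc_len w) v = drop (asc_len w) w" by (simp add: suffix_mat_def split: if_splits)
    then have "asc_len v < asc_len w" using suffix_mat_asc_len_less[OF S v w] ne by simp
    then show False using o by simp
  qed
  have "det_on (words S) (suffix_mat :: _ \<Rightarrow> _ \<Rightarrow> 'a) = (\<Prod>c\<in>id ` words S. det_on {x\<in>words S. id x = c} suffix_mat)"
    by (rule det_on_block_triangular_partition[OF finW, where ord = asc_len]) (use z in auto)
  also have "\<dots> = (\<Prod>c\<in>words S. (1::'a))"
  proof -
    have "\<And>c. c \<in> words S \<Longrightarrow> det_on {x\<in>words S. id x = c} suffix_mat = (1::'a)"
    proof -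
      fix c assume "c \<in> words S"
      then have "{x\<in>words S. id x = c} = {c}" by auto
      then show "det_on {x\<in>words S. id x = c} suffix_mat = (1::'a)" by (simp add: suffix_mat_def)
    qed
    then show ?thesis by simp
  qed
  finally show ?thesis by simp
qed

lemma valid_suffix_tl: assumes v: "valid_suffix S (a # t)" shows "valid_suffix S t"
proof -
  have "linext_word R ([a] @ t)" "set ([a] @ t) \<in> Up" using v by (auto simp: valid_suffix_def)
  then have "set t \<in> Up" using suffix_in_Up by blast
  then show ?thesis using v by (auto simp: valid_suffix_def linext_word_def)
qed

lemma valid_suffix_Cons: assumes v: "valid_suffix S t" and a: "a \<in> S - set t" and Ua: "insert a (set t) \<in> Up"
  shows "valid_suffix S (a # t)"
proof -
  have "\<forall>y\<in>set t. \<not> prec R y a"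
  proof (intro ballI notI)
    fix y assume "y \<in> set t" "prec R y a"
    then have "a \<in> set t" using Up_closed[of "set t" y a] v by (auto simp: valid_suffix_def prec_def)
    then show False using a by simp
  qed
  then show ?thesis using v a Ua by (auto simp: valid_suffix_def linext_word_def)
qed

lemma words_drop_nth: assumes S: "S \<in> Up" and w: "w \<in> words S" and j: "j < card S"
  shows "w ! j \<in> S - set (drop (Suc j) w)" "insert (w ! j) (set (drop (Suc j) w)) \<in> Up"
    "drop j w = w ! j # drop (Suc j) w"
proof -
  have len: "length w = card S" using length_words[OF w] .
  show dj: "drop j w = w ! j # drop (Suc j) w" using j len by (simp add: Cons_nth_drop_Suc)
  have vd: "valid_suffix S (drop j w)" using valid_suffix_drop[OF S w] .
  have "distinct (drop j w)" using distinct_words[OF w] by simp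
  then have "w ! j \<notin> set (drop (Suc j) w)" using dj by (metis distinct.simps(2))
  moreover have "w ! j \<in> S" using w j len by (auto simp: words_def)
  ultimately show "w ! j \<in> S - set (drop (Suc j) w)" by simp
  show "insert (w ! j) (set (drop (Suc j) w)) \<in> Up" using vd dj by (metis list.simps(15) valid_suffix_def)
qed

lemma length_valid_suffix:
  assumes S: "S \<in> Up" and vs: "valid_suffix S s"
  shows "length s \<le> card S"
proof -
  have "distinct s" using vs by (simp add: valid_suffix_def linext_word_def)
  then have "length s = card (set s)" by (simp add: distinct_card)
  also have "\<dots> \<le> card S" using vs Up_finite[OF S] by (simp add: valid_suffix_def card_mono)
  finally show ?thesis .
qed

definition suffix_span :: "nat set \<Rightarrow> nat \<Rightarrow> (nat list \<Rightarrow> 'a::comm_ring_1) \<Rightarrow> bool" where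
  "suffix_span S k f \<longleftrightarrow> (\<exists>c. (\<forall>w\<in>words S. f w = (\<Sum>v\<in>words S. suffix_mat w v * c v))
                            \<and> (\<forall>v\<in>words S. k < card S - asc_len v \<longrightarrow> c v = 0))"

lemma suffix_span_mono:
  assumes "suffix_span S k f" and "k \<le> k'"
  shows "suffix_span S k' f"
proof -
  obtain c where c: "\<forall>w\<in>words S. f w = (\<Sum>v\<in>words S. suffix_mat w v * c v)"
      "\<forall>v\<in>words S. k < card S - asc_len v \<longrightarrow> c v = 0"
    using assms(1) unfolding suffix_span_def by blast
  show ?thesis unfolding suffix_span_def
    by (rule exI[of _ c]) (use c assms(2) in auto)
qed

lemma suffix_span_cong:
  assumes "suffix_span S k f" and "\<And>w. w \<in> words S \<Longrightarrow> f w = g w"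
  shows "suffix_span S k g"
proof -
  obtain c where c: "\<forall>w\<in>words S. f w = (\<Sum>v\<in>words S. suffix_mat w v * c v)"
      "\<forall>v\<in>words S. k < card S - asc_len v \<longrightarrow> c v = 0"
    using assms(1) unfolding suffix_span_def by blast
  show ?thesis unfolding suffix_span_def
    by (rule exI[of _ c]) (use c assms(2) in auto)
qed

lemma suffix_span_zero: "suffix_span S k (\<lambda>w. 0)"
  unfolding suffix_span_def by (rule exI[of _ "\<lambda>v. 0"]) simp

lemma suffix_span_add:
  assumes "suffix_span S k f" "suffix_span S k g"
  shows "suffix_span S k (\<lambda>w. f w + g w)"
proof -
  obtain c d where c: "\<forall>w\<in>words S. f w = (\<Sum>v\<in>words S. suffix_mat w v * c v)"
      "\<forall>v\<in>words S. k < card S - asc_len v \<longrightarrow> c v = 0"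
    and d: "\<forall>w\<in>words S. g w = (\<Sum>v\<in>words S. suffix_mat w v * d v)"
      "\<forall>v\<in>words S. k < card S - asc_len v \<longrightarrow> d v = 0"
    using assms unfolding suffix_span_def by blast
  show ?thesis unfolding suffix_span_def
    by (rule exI[of _ "\<lambda>v. c v + d v"]) (simp add: c d distrib_left sum.distrib)
qed

lemma suffix_span_scale:
  assumes "suffix_span S k f"
  shows "suffix_span S k (\<lambda>w. a * f w)"
proof -
  obtain c where c: "\<forall>w\<in>words S. f w = (\<Sum>v\<in>words S. suffix_mat w v * c v)"
      "\<forall>v\<in>words S. k < card S - asc_len v \<longrightarrow> c v = 0"
    using assms unfolding suffix_span_def by blast
  show ?thesis unfolding suffix_span_def
    by (rule exI[of _ "\<lambda>v. a * c v"]) (simp add: c sum_distrib_left mult.left_commute)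
qed

lemma suffix_span_diff:
  assumes "suffix_span S k f" "suffix_span S k g"
  shows "suffix_span S k (\<lambda>w. f w - g w)"
  using suffix_span_add[OF assms(1) suffix_span_scale[OF assms(2), of "- 1"]] by simp

lemma suffix_span_sum:
  "finite I \<Longrightarrow> (\<And>i. i \<in> I \<Longrightarrow> suffix_span S k (f i)) \<Longrightarrow> suffix_span S k (\<lambda>w. \<Sum>i\<in>I. f i w)"
  by (induction I rule: finite_induct) (simp_all add: suffix_span_zero suffix_span_add)

lemma suffix_span_canon_word:
  assumes S: "S \<in> Up" and vs: "valid_suffix S s" and asc: "asc_len (canon_word S s) = card S - length s"
  shows "suffix_span S (length s) (\<lambda>w. of_bool (drop (card S - length s) w = s))"
  unfolding suffix_span_def
proof (rule exI[of _ "\<lambda>v. if v = canon_word S s then 1 else 0"], intro conjI ballI impI)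
  fix w assume "w \<in> words S"
  have finW: "finite (words S)" using finite_words Up_finite S by blast
  have "(\<Sum>v\<in>words S. suffix_mat w v * (if v = canon_word S s then 1 else 0)) = suffix_mat w (canon_word S s)"
    using finW canon_word_words[OF S vs] by (simp add: if_distrib cong: if_cong)
  also have "\<dots> = of_bool (drop (card S - length s) w = s)"
    unfolding suffix_mat_def asc drop_canon_word[OF S vs] by simp
  finally show "of_bool (drop (card S - length s) w = s)
      = (\<Sum>v\<in>words S. suffix_mat w v * (if v = canon_word S s then 1 else 0))" by (rule sym)
next
  fix v assume "v \<in> words S" "length s < card S - asc_len v"
  then show "(if v = canon_word S s then 1 else 0) = 0"
    using asc length_valid_suffix[OF S vs] by auto
qed

lemma suffix_indicator_Cons:
  assumes S: "S \<in> Up" and vs: "valid_suffix S (a # t)" and w: "w \<in> words S"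
  defines "B \<equiv> {b \<in> S - set t. insert b (set t) \<in> Up \<and> b \<noteq> a}"
  shows "(of_bool (drop (card S - Suc (length t)) w = a # t) :: 'a::comm_ring_1)
       = of_bool (drop (card S - length t) w = t) - (\<Sum>b\<in>B. of_bool (drop (card S - Suc (length t)) w = b # t))"
proof -
  let ?k = "card S - Suc (length t)"
  have len: "Suc (length t) \<le> card S" using length_valid_suffix[OF S vs] by simp
  have kN: "?k < card S" and NS: "card S - length t = Suc ?k" using len by auto
  have finB: "finite B" unfolding B_def using Up_finite[OF S] by simp
  note sl = words_drop_nth[OF S w kN]
  show ?thesis
  proof (cases "drop (card S - length t) w = t")
    case True
    let ?c = "w ! ?k"
    have dk: "drop ?k w = ?c # t" using sl(3) NS True by simp
    show ?thesis
    proof (cases "?c = a")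
      case True
      have "\<forall>b\<in>B. ?c \<noteq> b" using True B_def by auto
      then show ?thesis using dk True \<open>drop (card S - length t) w = t\<close> by simp
    next
      case False
      have cB: "?c \<in> B" using sl(1,2) NS True False B_def by simp
      have "(\<Sum>b\<in>B. (of_bool (drop ?k w = b # t) :: 'a)) = (\<Sum>b\<in>B. if b = ?c then 1 else 0)"
        unfolding dk by (rule sum.cong) auto
      also have "\<dots> = 1" using finB cB by simp
      finally show ?thesis using dk False \<open>drop (card S - length t) w = t\<close> by simp
    qed
  next
    case False
    then show ?thesis using sl(3) NS by simp
  qed
qed

lemma suffix_span_indicator:
  assumes S: "S \<in> Up"
  shows "valid_suffix S s \<Longrightarrow>
    suffix_span S (length s) (\<lambda>w. (of_bool (drop (card S - length s) w = s) :: 'a::comm_ring_1))"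
proof (induction s)
  case Nil
  then show ?case using suffix_span_canon_word[OF S Nil] asc_len_canon_word_Nil[OF S] by simp
next
  case (Cons a t)
  show ?case
  proof (cases "breaks_asc S (a # t)")
    case True
    then show ?thesis
      using suffix_span_canon_word[OF S Cons.prems] asc_len_canon_word[OF S Cons.prems True] by simp
  next
    case False
    define B where "B = {b \<in> S - set t. insert b (set t) \<in> Up \<and> b \<noteq> a}"
    have vt: "valid_suffix S t" using valid_suffix_tl Cons.prems .
    have aS: "a \<in> S - set t" using Cons.prems by (auto simp: valid_suffix_def linext_word_def)
    have amax: "\<forall>b\<in>S - set (a # t). b \<le> a" using False by (auto simp: breaks_asc_def not_less)
    have vB: "valid_suffix S (b # t)" and nrB: "breaks_asc S (b # t)" if b: "b \<in> B" for b
    proof -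
      show "valid_suffix S (b # t)" using valid_suffix_Cons[OF vt] b B_def by auto
      have "b < a" using amax b B_def by force
      moreover have "a \<in> S - set (b # t)" using aS b B_def by auto
      ultimately show "breaks_asc S (b # t)" unfolding breaks_asc_def by auto
    qed
    have "suffix_span S (Suc (length t)) (\<lambda>w. (of_bool (drop (card S - length t) w = t) :: 'a))"
      using suffix_span_mono[OF Cons.IH[OF vt]] by simp
    moreover have "suffix_span S (Suc (length t))
        (\<lambda>w. \<Sum>b\<in>B. (of_bool (drop (card S - Suc (length t)) w = b # t) :: 'a))"
    proof (rule suffix_span_sum)
      show "finite B" unfolding B_def using Up_finite[OF S] by simp
      fix b assume b: "b \<in> B"
      show "suffix_span S (Suc (length t)) (\<lambda>w. of_bool (drop (card S - Suc (length t)) w = b # t))"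
        using suffix_span_canon_word[OF S vB[OF b]] asc_len_canon_word[OF S vB[OF b] nrB[OF b]] by simp
    qed
    ultimately have "suffix_span S (Suc (length t)) (\<lambda>w. of_bool (drop (card S - length t) w = t)
        - (\<Sum>b\<in>B. (of_bool (drop (card S - Suc (length t)) w = b # t) :: 'a)))"
      by (rule suffix_span_diff)
    then have "suffix_span S (Suc (length t)) (\<lambda>w. (of_bool (drop (card S - Suc (length t)) w = a # t) :: 'a))"
      by (rule suffix_span_cong) (simp add: suffix_indicator_Cons[OF S Cons.prems] B_def)
    then show ?thesis by simp
  qed
qed

lemma drop_promote_in:
  assumes S: "S \<in> Up" and w: "w \<in> words S" and r: "r < card S" and i: "i \<in> set (drop (Suc r) w)"
  shows "drop r (promote R i w) = w ! r # promote R i (drop (Suc r) w)"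
proof -
  note sl = words_drop_nth[OF S w r]
  have len: "length w = card S" using length_words[OF w] .
  have dw: "distinct w" using distinct_words[OF w] .
  have wsplit: "w = take r w @ (w ! r # drop (Suc r) w)" using sl(3) by (metis append_take_drop_id)
  have "set (take r w) \<inter> set (drop r w) = {}" using dw by (metis append_take_drop_id distinct_append)
  then have "i \<notin> set (take r w)" using i sl(3) by auto
  then have "promote R i w = take r w @ promote R i (w ! r # drop (Suc r) w)" using promote_append_notin wsplit by metis
  moreover have "w ! r \<noteq> i" using sl(1) i by auto
  ultimately have "promote R i w = take r w @ (w ! r # promote R i (drop (Suc r) w))" by simp
  moreover have "length (take r w) = r" using r len by simp
  ultimately show ?thesis by (metis append_eq_conv_conj)
qed

lemma drop_promote_out:
  assumes S: "S \<in> Up" and w: "w \<in> words S" and r: "r < card S" and iS: "i \<in> S" and i: "i \<notin> set (drop (Suc r) w)"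
  shows "drop r (promote R i w) = bubble R (top_above i (set (drop (Suc r) w)) # drop (Suc r) w)"
proof -
  have len: "length w = card S" using length_words[OF w] .
  have iw: "i \<in> set w" using iS w by (simp add: words_def)
  obtain r' where r': "promote R i w = r' @ bubble R (top_above i (set (drop (Suc r) w)) # drop (Suc r) w)"
    "Suc (length r') = length (take (Suc r) w)"
    using promote_out_of_suffix[OF S w iw _ i, of "take (Suc r) w"] by auto
  have "length r' = r" using r' r len by simp
  then show ?thesis using r'(1) by simp
qed

definition tail_weight :: "(nat \<Rightarrow> 'a::comm_ring_1) \<Rightarrow> nat list \<Rightarrow> nat list \<Rightarrow> 'a" where
  "tail_weight x t' t = (\<Sum>i\<in>set t. x i * of_bool (promote R i t = t'))"

definition same_block_coeff :: "(nat \<Rightarrow> 'a::comm_ring_1) \<Rightarrow> nat list \<Rightarrow> nat list \<Rightarrow> 'a" where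
  "same_block_coeff x w' v = of_bool (asc_len v = asc_len w' \<and> v ! asc_len w' = w' ! asc_len w' \<and> set (drop (Suc (asc_len w')) v) = set (drop (Suc (asc_len w')) w'))
      * tail_weight x (drop (Suc (asc_len w')) w') (drop (Suc (asc_len v)) v)"

lemma tail_weight_zero: "set t \<noteq> set t' \<Longrightarrow> tail_weight x t' t = 0"
  unfolding tail_weight_def by (rule sum.neutral) auto

lemma same_block_support:
  fixes x :: "nat \<Rightarrow> 'a::comm_ring_1"
  assumes S: "S \<in> Up" and w: "w \<in> words S" and v: "v \<in> words S" and w': "w' \<in> words S"
    and lt: "asc_len w' < length w'" and nz: "suffix_mat w v * same_block_coeff x w' v \<noteq> 0"
  defines "r \<equiv> asc_len w'"
  shows "v = canon_word S (drop r w)" "w ! r = w' ! r" "set (drop (Suc r) w) = set (drop (Suc r) w')"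
proof -
  have rN: "r < card S" using lt length_words[OF w'] r_def by simp
  have c: "asc_len v = r" "v ! r = w' ! r" "set (drop (Suc r) v) = set (drop (Suc r) w')"
    using nz unfolding same_block_coeff_def r_def by (auto simp: of_bool_def split: if_splits)
  have dv: "drop r w = drop r v" using nz c(1) unfolding suffix_mat_def by (auto simp: of_bool_def split: if_splits)
  then show "v = canon_word S (drop r w)" using canon_word_drop_asc_len[OF S v] c(1) by simp
  have "w ! r = v ! r \<and> drop (Suc r) w = drop (Suc r) v"
    using dv words_drop_nth(3)[OF S w rN] words_drop_nth(3)[OF S v rN] by simp
  then show "w ! r = w' ! r" "set (drop (Suc r) w) = set (drop (Suc r) w')" using c by simp_all
qed

lemma same_block_expansion:
  fixes x :: "nat \<Rightarrow> 'a::comm_ring_1"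
  assumes S: "S \<in> Up" and w: "w \<in> words S" and w': "w' \<in> words S" and lt: "asc_len w' < length w'"
  defines "r \<equiv> asc_len w'"
  shows "of_bool (w ! r = w' ! r) * tail_weight x (drop (Suc r) w') (drop (Suc r) w)
     = (\<Sum>v\<in>words S. suffix_mat w v * same_block_coeff x w' v)"
proof -
  let ?t = "drop (Suc r) w" and ?t' = "drop (Suc r) w'"
  note supp = same_block_support[OF S w _ w' lt, folded r_def]
  have finW: "finite (words S)" using finite_words Up_finite S by blast
  have rN: "r < card S" using lt length_words[OF w'] r_def by simp
  show ?thesis
  proof (cases "w ! r = w' ! r \<and> set ?t = set ?t'")
    case True
    let ?v0 = "canon_word S (drop r w)"
    have vs: "valid_suffix S (drop r w)" using valid_suffix_drop[OF S w] .
    have "breaks_asc S (drop r w')" using breaks_asc_drop[OF S w' lt] r_def by simp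
    moreover have "drop r w = w ! r # ?t" "drop r w' = w' ! r # ?t'"
      using words_drop_nth(3)[OF S w rN] words_drop_nth(3)[OF S w' rN] by simp_all
    ultimately have nr: "breaks_asc S (drop r w)" using True by (simp add: breaks_asc_def)
    have lenw: "length (drop r w) = card S - r" using length_words[OF w] by simp
    have v0: "?v0 \<in> words S" using canon_word_words[OF S vs] .
    have asc_v0: "asc_len ?v0 = r" using asc_len_canon_word[OF S vs nr] lenw rN by simp
    have dv0: "drop r ?v0 = drop r w" using drop_canon_word[OF S vs] lenw rN by simp
    have "(\<Sum>v\<in>words S. suffix_mat w v * same_block_coeff x w' v)
        = suffix_mat w ?v0 * same_block_coeff x w' ?v0 + (\<Sum>v\<in>words S - {?v0}. suffix_mat w v * same_block_coeff x w' v)"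
      using finW v0 by (simp add: sum.remove)
    also have "(\<Sum>v\<in>words S - {?v0}. suffix_mat w v * same_block_coeff x w' v) = 0"
      using supp(1) by (intro sum.neutral) blast
    also have "suffix_mat w ?v0 = (1::'a)" unfolding suffix_mat_def asc_v0 dv0 by simp
    also have "same_block_coeff x w' ?v0 = tail_weight x ?t' ?t"
      using dv0 words_drop_nth(3)[OF S v0 rN] words_drop_nth(3)[OF S w rN] True asc_v0 rN
      unfolding same_block_coeff_def r_def by simp
    finally show ?thesis using True by simp
  next
    case False
    then have "(of_bool (w ! r = w' ! r) :: 'a) * tail_weight x ?t' ?t = 0"
      using tail_weight_zero by auto
    moreover have "suffix_mat w v * same_block_coeff x w' v = 0" if v: "v \<in> words S" for v
      using supp(2,3)[OF v] False by blast
    ultimately show ?thesis by simp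
  qed
qed

definition outside_weight :: "nat set \<Rightarrow> (nat \<Rightarrow> 'a::comm_ring_1) \<Rightarrow> nat list \<Rightarrow> nat list \<Rightarrow> 'a" where
  "outside_weight S x w' t = (\<Sum>i\<in>S - set t. x i * of_bool (bubble R (top_above i (set t) # t) = drop (asc_len w') w'))"

definition valid_suffixes :: "nat set \<Rightarrow> nat \<Rightarrow> nat list set" where
  "valid_suffixes S k = {t. valid_suffix S t \<and> length t = k}"

definition block_entry :: "nat set \<Rightarrow> (nat \<Rightarrow> 'a::comm_ring_1) \<Rightarrow> nat list \<Rightarrow> nat list \<Rightarrow> 'a" where
  "block_entry S x w' v = (if asc_len w' = length w' then (\<Sum>i\<in>S. x i)
      else tail_weight x (drop (Suc (asc_len w')) w') (drop (Suc (asc_len v)) v))"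

lemma finite_valid_suffixes: assumes S: "S \<in> Up" shows "finite (valid_suffixes S k)"
proof -
  have "valid_suffixes S k \<subseteq> {xs. set xs \<subseteq> S \<and> length xs = k}"
    unfolding valid_suffixes_def valid_suffix_def by auto
  moreover have "finite {xs. set xs \<subseteq> S \<and> length xs = k}" using Up_finite[OF S] by (rule finite_lists_length_eq)
  ultimately show ?thesis by (rule finite_subset)
qed

lemma prom_suffix_mat_column:
  assumes S: "S \<in> Up" and w: "w \<in> words S" and w': "w' \<in> words S" and lt: "asc_len w' < length w'"
  defines "r \<equiv> asc_len w'"
  shows "(\<Sum>v\<in>words S. prom_mat S x w v * suffix_mat v w')
       = of_bool (w ! r = w' ! r) * tail_weight x (drop (Suc r) w') (drop (Suc r) w)
         + outside_weight S x w' (drop (Suc r) w)"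
proof -
  let ?t = "drop (Suc r) w" and ?t' = "drop (Suc r) w'"
  have finS: "finite S" using Up_finite S by blast
  have rN: "r < card S" using lt length_words[OF w'] r_def by simp
  have tS: "set ?t \<subseteq> S" using w by (auto simp: words_def dest: in_set_dropD)
  have "(\<Sum>v\<in>words S. prom_mat S x w v * suffix_mat v w') = (\<Sum>i\<in>S. x i * suffix_mat (promote R i w) w')"
    by (rule prom_mat_sum[OF S w])
  also have "\<dots> = (\<Sum>i\<in>S. x i * of_bool (drop r (promote R i w) = drop r w'))"
    by (simp add: suffix_mat_def r_def)
  also have "\<dots> = (\<Sum>i\<in>S - set ?t. x i * of_bool (drop r (promote R i w) = drop r w'))
                + (\<Sum>i\<in>set ?t. x i * of_bool (drop r (promote R i w) = drop r w'))"
    by (rule sum.subset_diff[OF tS finS])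
  also have "(\<Sum>i\<in>S - set ?t. x i * of_bool (drop r (promote R i w) = drop r w')) = outside_weight S x w' ?t"
    unfolding outside_weight_def r_def by (rule sum.cong[OF refl]) (simp add: drop_promote_out[OF S w rN[unfolded r_def]])
  also have "(\<Sum>i\<in>set ?t. x i * of_bool (drop r (promote R i w) = drop r w'))
      = (\<Sum>i\<in>set ?t. of_bool (w ! r = w' ! r) * (x i * of_bool (promote R i ?t = ?t')))"
  proof (rule sum.cong[OF refl])
    fix i assume i: "i \<in> set ?t"
    show "x i * of_bool (drop r (promote R i w) = drop r w')
        = of_bool (w ! r = w' ! r) * (x i * of_bool (promote R i ?t = ?t'))"
      unfolding drop_promote_in[OF S w rN i] words_drop_nth(3)[OF S w' rN] by simp
  qed
  also have "\<dots> = of_bool (w ! r = w' ! r) * tail_weight x ?t' ?t"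
    unfolding tail_weight_def by (simp add: sum_distrib_left)
  finally show ?thesis by (simp add: add.commute)
qed

text \<open>\<open>u\<close> is column \<open>w'\<close> of \<open>Q\<^sup>-\<^sup>1 A Q\<close> for \<open>A = prom_mat S x\<close> and \<open>Q = suffix_mat\<close>, and it vanishes
  outside the block of \<open>w'\<close> and the words with a longer ascending prefix.\<close>

definition block_column :: "nat set \<Rightarrow> (nat \<Rightarrow> 'a::comm_ring_1) \<Rightarrow> nat list \<Rightarrow> (nat list \<Rightarrow> 'a) \<Rightarrow> bool" where
  "block_column S x w' u \<longleftrightarrow>
     (\<forall>w\<in>words S. (\<Sum>v\<in>words S. prom_mat S x w v * suffix_mat v w') = (\<Sum>v\<in>words S. suffix_mat w v * u v))
     \<and> (\<forall>v\<in>words S. u v \<noteq> 0 \<longrightarrow> asc_len w' < asc_len v \<or> block_key v = block_key w')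
     \<and> (\<forall>v\<in>words S. block_key v = block_key w' \<longrightarrow> u v = block_entry S x w' v)"

lemma outside_weight_suffix_span:
  fixes x :: "nat \<Rightarrow> 'a::comm_ring_1"
  assumes S: "S \<in> Up" and rN: "r < card S"
  shows "suffix_span S (card S - Suc r) (\<lambda>w. outside_weight S x w' (drop (Suc r) w))"
proof -
  define k where "k = card S - Suc r"
  have Nk: "card S - k = Suc r" using rN k_def by auto
  have "suffix_span S k (\<lambda>w. \<Sum>t\<in>valid_suffixes S k. outside_weight S x w' t * of_bool (drop (card S - k) w = t))"
  proof (intro suffix_span_sum suffix_span_scale)
    show "finite (valid_suffixes S k)" by (rule finite_valid_suffixes[OF S])
    fix t assume "t \<in> valid_suffixes S k"
    then show "suffix_span S k (\<lambda>w. of_bool (drop (card S - k) w = t))"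
      using suffix_span_indicator[OF S] unfolding valid_suffixes_def by force
  qed
  then show ?thesis unfolding k_def[symmetric]
  proof (rule suffix_span_cong)
    fix w assume w: "w \<in> words S"
    have tV: "drop (Suc r) w \<in> valid_suffixes S k"
      unfolding valid_suffixes_def using valid_suffix_drop[OF S w] length_words[OF w] k_def by simp
    have "outside_weight S x w' t * of_bool (drop (card S - k) w = t)
        = (if drop (Suc r) w = t then outside_weight S x w' t else 0)" for t
      unfolding Nk by simp
    then show "(\<Sum>t\<in>valid_suffixes S k. outside_weight S x w' t * of_bool (drop (card S - k) w = t))
        = outside_weight S x w' (drop (Suc r) w)"
      using finite_valid_suffixes[OF S] tV by (simp add: sum.delta')
  qed
qed

lemma block_key_eq_imp_asc_len_eq:
  assumes S: "S \<in> Up" and v: "v \<in> words S" and w': "w' \<in> words S"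
    and lt: "asc_len w' < length w'" and kv: "block_key v = block_key w'"
  shows "asc_len v = asc_len w'" "v ! asc_len v = w' ! asc_len w'"
    "set (drop (Suc (asc_len v)) v) = set (drop (Suc (asc_len w')) w')"
proof -
  have "block_key w' = Some (w' ! asc_len w', set (drop (Suc (asc_len w')) w'))"
    using lt by (simp add: block_key_def)
  then have nl: "asc_len v \<noteq> length v" and kv2: "v ! asc_len v = w' ! asc_len w'"
      "set (drop (Suc (asc_len v)) v) = set (drop (Suc (asc_len w')) w')"
    using kv by (auto simp: block_key_def split: if_splits)
  have "card (set (drop (Suc (asc_len v)) v)) = card S - Suc (asc_len v)"
    using distinct_words[OF v] length_words[OF v] by (simp add: distinct_card)
  moreover have "card (set (drop (Suc (asc_len w')) w')) = card S - Suc (asc_len w')"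
    using distinct_words[OF w'] length_words[OF w'] by (simp add: distinct_card)
  moreover have "asc_len v < card S" "asc_len w' < card S"
    using nl lt asc_len_le[of v] length_words[OF v] length_words[OF w'] by auto
  ultimately show "asc_len v = asc_len w'" using kv2(2) by simp
  show "v ! asc_len v = w' ! asc_len w'" "set (drop (Suc (asc_len v)) v) = set (drop (Suc (asc_len w')) w')"
    by (fact kv2)+
qed

lemma block_column_unsorted:
  fixes x :: "nat \<Rightarrow> 'a::comm_ring_1"
  assumes S: "S \<in> Up" and w': "w' \<in> words S" and lt: "asc_len w' < length w'"
  shows "\<exists>u. block_column S x w' u"
proof -
  let ?r = "asc_len w'"
  let ?t' = "drop (Suc ?r) w'"
  define k where "k = card S - Suc ?r"
  have lw': "length w' = card S" using length_words[OF w'] .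
  have rN: "?r < card S" using lt lw' by simp
  have "suffix_span S k (\<lambda>w. outside_weight S x w' (drop (Suc ?r) w))"
    unfolding k_def by (rule outside_weight_suffix_span[OF S rN])
  then obtain c where c: "\<forall>w\<in>words S. outside_weight S x w' (drop (Suc ?r) w) = (\<Sum>v\<in>words S. suffix_mat w v * c v)"
      "\<forall>v\<in>words S. k < card S - asc_len v \<longrightarrow> c v = 0"
    unfolding suffix_span_def by blast
  have c_large: "?r < asc_len v" if v: "v \<in> words S" and nz: "c v \<noteq> 0" for v
  proof -
    have "\<not> k < card S - asc_len v" using c(2) v nz by blast
    moreover have "asc_len v \<le> card S" using asc_len_le[of v] length_words[OF v] by simp
    ultimately show ?thesis using k_def rN by linarith
  qed
  define u where "u = (\<lambda>v. same_block_coeff x w' v + c v)"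
  show ?thesis unfolding block_column_def
  proof (rule exI[where x = u], intro conjI ballI impI)
    fix w assume w: "w \<in> words S"
    show "(\<Sum>v\<in>words S. prom_mat S x w v * suffix_mat v w') = (\<Sum>v\<in>words S. suffix_mat w v * u v)"
      unfolding prom_suffix_mat_column[OF S w w' lt] same_block_expansion[OF S w w' lt] c(1)[rule_format, OF w]
      by (simp add: u_def algebra_simps sum.distrib)
  next
    fix v assume v: "v \<in> words S" and nz: "u v \<noteq> 0"
    show "?r < asc_len v \<or> block_key v = block_key w'"
    proof (cases "same_block_coeff x w' v = 0")
      case True
      then show ?thesis using nz c_large[OF v] unfolding u_def by simp
    next
      case False
      then have "asc_len v = ?r \<and> v ! ?r = w' ! ?r \<and> set (drop (Suc ?r) v) = set ?t'"
        unfolding same_block_coeff_def by (auto simp: of_bool_def split: if_splits)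
      then show ?thesis using lt lw' length_words[OF v] by (simp add: block_key_def)
    qed
  next
    fix v assume v: "v \<in> words S" and kv: "block_key v = block_key w'"
    note same = block_key_eq_imp_asc_len_eq[OF S v w' lt kv]
    have "c v = 0" using same(1) c_large[OF v] by auto
    then have "u v = same_block_coeff x w' v" unfolding u_def by simp
    also have "\<dots> = block_entry S x w' v" unfolding same_block_coeff_def block_entry_def using same lt by simp
    finally show "u v = block_entry S x w' v" .
  qed
qed

lemma block_column_sorted:
  fixes x :: "nat \<Rightarrow> 'a::comm_ring_1"
  assumes S: "S \<in> Up" and w': "w' \<in> words S" and eq: "asc_len w' = length w'"
  shows "\<exists>u. block_column S x w' u"
proof -
  have finW: "finite (words S)" using finite_words Up_finite S by blast
  have lw': "length w' = card S" using length_words[OF w'] .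
  have Q1: "suffix_mat v w' = (1::'a)" if v: "v \<in> words S" for v
    unfolding suffix_mat_def eq using length_words[OF v] lw' by simp
  show ?thesis unfolding block_column_def
  proof (rule exI[where x = "\<lambda>v. if v = w' then (\<Sum>i\<in>S. x i) else 0"], intro conjI ballI impI)
    fix w assume w: "w \<in> words S"
    have "(\<Sum>v\<in>words S. prom_mat S x w v * suffix_mat v w') = (\<Sum>i\<in>S. x i * suffix_mat (promote R i w) w')"
      by (rule prom_mat_sum[OF S w])
    also have "\<dots> = (\<Sum>i\<in>S. x i)" using Q1 promote_words[OF w] by simp
    also have "\<dots> = (\<Sum>v\<in>words S. suffix_mat w v * (if v = w' then (\<Sum>i\<in>S. x i) else 0))"
      using finW w' Q1[OF w] by (simp add: if_distrib cong: if_cong)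
    finally show "(\<Sum>v\<in>words S. prom_mat S x w v * suffix_mat v w')
        = (\<Sum>v\<in>words S. suffix_mat w v * (if v = w' then (\<Sum>i\<in>S. x i) else 0))" .
  next
    fix v assume "v \<in> words S" "(if v = w' then (\<Sum>i\<in>S. x i) else 0) \<noteq> 0"
    then show "asc_len w' < asc_len v \<or> block_key v = block_key w'" by (auto split: if_splits)
  next
    fix v assume v: "v \<in> words S" and "block_key v = block_key w'"
    then have "asc_len v = length v" using eq by (auto simp: block_key_def split: if_splits)
    then have "v = canon_word S []" using canon_word_drop_asc_len[OF S v] by simp
    moreover have "w' = canon_word S []" using canon_word_drop_asc_len[OF S w'] eq by simp
    ultimately show "(if v = w' then (\<Sum>i\<in>S. x i) else 0) = block_entry S x w' v"
      using eq by (simp add: block_entry_def)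
  qed
qed

lemma exists_block_column:
  fixes x :: "nat \<Rightarrow> 'a::comm_ring_1"
  assumes S: "S \<in> Up" and w': "w' \<in> words S"
  shows "\<exists>u. block_column S x w' u"
  using block_column_sorted[OF S w'] block_column_unsorted[OF S w'] asc_len_le[of w']
  by (cases "asc_len w' = length w'") auto

lemma char_det_blocks:
  fixes x :: "nat \<Rightarrow> 'a::comm_ring_1"
  assumes S: "S \<in> Up"
  shows "char_det S x lam = (\<Prod>c\<in>block_key ` words S.
           det_on {v\<in>words S. block_key v = c} (\<lambda>v w'. (if v = w' then lam else 0) - block_entry S x w' v))"
proof -
  have finW: "finite (words S)" using finite_words Up_finite S by blast
  have "\<forall>w'\<in>words S. \<exists>u. block_column S x w' u" using exists_block_column[OF S] by blast
  then obtain col where col: "\<forall>w'\<in>words S. block_column S x w' (col w')"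
    using bchoice by blast
  have bc: "block_column S x w' (col w')" if "w' \<in> words S" for w'
    using col that by blast
  have col_mult: "(\<Sum>v\<in>words S. prom_mat S x w v * suffix_mat v w') = (\<Sum>v\<in>words S. suffix_mat w v * col w' v)"
    if "w \<in> words S" "w' \<in> words S" for w w'
    using conjunct1[OF bc[OF that(2), unfolded block_column_def]] that(1) by blast
  have col_support: "asc_len w' < asc_len v \<or> block_key v = block_key w'"
    if "w' \<in> words S" "v \<in> words S" "col w' v \<noteq> 0" for w' v
    using conjunct1[OF conjunct2[OF bc[OF that(1), unfolded block_column_def]]] that(2,3) by blast
  have col_block: "col w' v = block_entry S x w' v"
    if "w' \<in> words S" "v \<in> words S" "block_key v = block_key w'" for w' v
    using conjunct2[OF conjunct2[OF bc[OF that(1), unfolded block_column_def]]] that(2,3) by blast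
  have "char_det S x lam = det_on (words S) (\<lambda>w w'. (if w = w' then lam else 0) - col w' w)"
    unfolding char_det_def by (rule det_on_char_similar[OF finW det_suffix_mat[OF S] col_mult])
  also have "\<dots> = (\<Prod>c\<in>block_key ` words S.
      det_on {v\<in>words S. block_key v = c} (\<lambda>w w'. (if w = w' then lam else 0) - col w' w))"
  proof (rule det_on_block_triangular_partition[OF finW, where ord = block_rank])
    fix v w' assume v: "v \<in> words S" and w': "w' \<in> words S" and ne: "block_key v \<noteq> block_key w'"
      and o: "block_rank (block_key w') \<le> block_rank (block_key v)"
    have "col w' v = 0"
    proof (rule ccontr)
      assume "col w' v \<noteq> 0"
      then have "asc_len w' < asc_len v" using col_support[OF w' v] ne by simp
      moreover have "asc_len v \<le> card S" using asc_len_le[of v] length_words[OF v] by simp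
      ultimately show False using o block_rank_block_key[OF S v] block_rank_block_key[OF S w'] by simp
    qed
    then show "(if v = w' then lam else 0) - col w' v = 0" using ne by auto
  qed
  also have "\<dots> = (\<Prod>c\<in>block_key ` words S.
      det_on {v\<in>words S. block_key v = c} (\<lambda>v w'. (if v = w' then lam else 0) - block_entry S x w' v))"
  proof (rule prod.cong[OF refl], rule det_on_cong)
    fix c v w' assume "v \<in> {v\<in>words S. block_key v = c}" "w' \<in> {v\<in>words S. block_key v = c}"
    then show "(if v = w' then lam else 0) - col w' v = (if v = w' then lam else 0) - block_entry S x w' v"
      using col_block by simp
  qed
  finally show ?thesis .
qed

lemma block_key_canon_word:
  assumes S: "S \<in> Up" and vs: "valid_suffix S (a # t)" and nr: "breaks_asc S (a # t)"
  shows "canon_word S (a # t) \<in> words S" "asc_len (canon_word S (a # t)) = card S - Suc (length t)"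
    "block_key (canon_word S (a # t)) = Some (a, set t)" "drop (Suc (asc_len (canon_word S (a # t)))) (canon_word S (a # t)) = t"
proof -
  let ?v = "canon_word S (a # t)"
  show v: "?v \<in> words S" using canon_word_words[OF S vs] .
  show asc: "asc_len ?v = card S - Suc (length t)" using asc_len_canon_word[OF S vs nr] by simp
  have dr: "drop (asc_len ?v) ?v = a # t" using drop_canon_word[OF S vs] asc by simp
  have "a \<in> S" using vs by (simp add: valid_suffix_def)
  then have "card S \<ge> 1" using Up_finite[OF S] by (metis One_nat_def Suc_leI card_gt_0_iff empty_iff)
  moreover have "length (a # t) \<le> card S"
  proof -
    have "distinct (a # t)" using vs by (simp add: valid_suffix_def linext_word_def)
    then have "length (a # t) = card (set (a # t))" by (simp add: distinct_card)
    also have "\<dots> \<le> card S" using vs Up_finite[OF S] by (simp add: valid_suffix_def card_mono)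
    finally show ?thesis .
  qed
  ultimately have lt: "asc_len ?v < length ?v" using asc length_words[OF v] by simp
  have nth: "?v ! asc_len ?v = a" using dr lt by (metis hd_drop_conv_nth list.sel(1))
  show dt: "drop (Suc (asc_len ?v)) ?v = t" using dr by (metis drop_Suc list.sel(3) tl_drop)
  show "block_key ?v = Some (a, set t)" using lt nth dt by (simp add: block_key_def)
qed

lemma block_key_Some:
  assumes S: "S \<in> Up" and v: "v \<in> words S" and k: "block_key v = Some (a, S0)"
  shows "asc_len v < length v" "a = v ! asc_len v" "S0 = set (drop (Suc (asc_len v)) v)"
    "drop (asc_len v) v = a # drop (Suc (asc_len v)) v" "breaks_asc S (drop (asc_len v) v)" "S0 \<in> Up" "a \<in> S - S0"
    "insert a S0 \<in> Up" "S0 \<subseteq> S"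
proof -
  show lt: "asc_len v < length v" using k asc_len_le[of v] by (auto simp: block_key_def split: if_splits)
  show a: "a = v ! asc_len v" and S0: "S0 = set (drop (Suc (asc_len v)) v)" using k lt by (auto simp: block_key_def split: if_splits)
  have rN: "asc_len v < card S" using lt length_words[OF v] by simp
  note sl = words_drop_nth[OF S v rN]
  show "drop (asc_len v) v = a # drop (Suc (asc_len v)) v" using sl(3) a by simp
  show "breaks_asc S (drop (asc_len v) v)" using breaks_asc_drop[OF S v lt] .
  show "S0 \<in> Up" using valid_suffix_drop[OF S v, of "Suc (asc_len v)"] S0 by (simp add: valid_suffix_def)
  show "a \<in> S - S0" "insert a S0 \<in> Up" using sl a S0 by auto
  show "S0 \<subseteq> S" using valid_suffix_drop[OF S v, of "Suc (asc_len v)"] S0 by (simp add: valid_suffix_def)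
qed

lemma tail_weight_eq_prom_mat: assumes t: "t \<in> words S0" and fin: "finite S0"
  shows "tail_weight x t' t = prom_mat S0 x t t'"
proof -
  have st: "set t = S0" using t by (simp add: words_def)
  have "prom_mat S0 x t t' = (\<Sum>i\<in>S0. if promote R i t = t' then x i else 0)"
    unfolding prom_mat_def using fin by (rule sum.inter_filter)
  also have "\<dots> = tail_weight x t' t" unfolding tail_weight_def st by (rule sum.cong) auto
  finally show ?thesis by simp
qed

lemma block_canon_word_valid:
  assumes S: "S \<in> Up" and v0: "v0 \<in> words S" and k0: "block_key v0 = Some (a, S0)"
    and t: "t \<in> words S0"
  shows "valid_suffix S (a # t)" "breaks_asc S (a # t)"
proof -
  note ks = block_key_Some[OF S v0 k0]
  have "valid_suffix S t" using t ks(6,9) by (auto simp: words_def valid_suffix_def)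
  then show "valid_suffix S (a # t)" using valid_suffix_Cons ks(7,8) t by (simp add: words_def)
  have "set (a # t) = set (drop (asc_len v0) v0)" using ks(3,4) t by (simp add: words_def)
  moreover have "hd (a # t) = hd (drop (asc_len v0) v0)" using ks(4) by simp
  moreover have "drop (asc_len v0) v0 \<noteq> []" using ks(4) by simp
  ultimately show "breaks_asc S (a # t)" using ks(5) unfolding breaks_asc_def by simp
qed

lemma bij_betw_canon_word_block:
  assumes S: "S \<in> Up" and v0: "v0 \<in> words S" and k0: "block_key v0 = Some (a, S0)"
  shows "bij_betw (\<lambda>t. canon_word S (a # t)) (words S0) {v\<in>words S. block_key v = Some (a, S0)}"
proof -
  let ?B = "{v\<in>words S. block_key v = Some (a, S0)}"
  let ?h = "\<lambda>t. canon_word S (a # t)"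
  let ?g = "\<lambda>v. drop (Suc (asc_len v)) v"
  note vt = block_canon_word_valid(1)[OF S v0 k0] and nrt = block_canon_word_valid(2)[OF S v0 k0]
  show ?thesis
  proof (rule bij_betw_byWitness[where f' = ?g])
    show "\<forall>t\<in>words S0. ?g (?h t) = t" using block_key_canon_word(4)[OF S vt nrt] by simp
    show "\<forall>v\<in>?B. ?h (?g v) = v"
    proof
      fix v assume "v \<in> ?B"
      then have v: "v \<in> words S" and kv: "block_key v = Some (a, S0)" by auto
      show "?h (?g v) = v" using block_key_Some(4)[OF S v kv] canon_word_drop_asc_len[OF S v] by simp
    qed
    show "?h ` words S0 \<subseteq> ?B"
    proof
      fix v assume "v \<in> ?h ` words S0"
      then obtain t where t: "t \<in> words S0" and vt': "v = ?h t" by auto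
      show "v \<in> ?B" using block_key_canon_word(1,3)[OF S vt[OF t] nrt[OF t]] t vt' by (simp add: words_def)
    qed
    show "?g ` ?B \<subseteq> words S0"
    proof
      fix t assume "t \<in> ?g ` ?B"
      then obtain v where v: "v \<in> words S" and kv: "block_key v = Some (a, S0)" and tv: "t = ?g v" by auto
      have "linext_word R t" using valid_suffix_drop[OF S v, of "Suc (asc_len v)"] tv by (simp add: valid_suffix_def)
      moreover have "set t = S0" using block_key_Some(3)[OF S v kv] tv by simp
      ultimately show "t \<in> words S0" by (simp add: words_def)
    qed
  qed
qed

lemma det_block_Some:
  assumes S: "S \<in> Up" and v0: "v0 \<in> words S" and k0: "block_key v0 = Some (a, S0)"
  shows "det_on {v\<in>words S. block_key v = Some (a, S0)} (\<lambda>v w'. (if v = w' then lam else 0) - block_entry S x w' v)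
       = char_det S0 x lam"
proof -
  have finS0: "finite S0" using Up_finite[OF block_key_Some(6)[OF S v0 k0]] .
  let ?h = "\<lambda>t. canon_word S (a # t)"
  note vt = block_canon_word_valid(1)[OF S v0 k0] and nrt = block_canon_word_valid(2)[OF S v0 k0]
  have "det_on {v\<in>words S. block_key v = Some (a, S0)} (\<lambda>v w'. (if v = w' then lam else 0) - block_entry S x w' v)
      = det_on (words S0) (\<lambda>t t'. (if ?h t = ?h t' then lam else 0) - block_entry S x (?h t') (?h t))"
    by (rule det_on_reindex[OF bij_betw_canon_word_block[OF S v0 k0] finite_words[OF finS0]])
  also have "\<dots> = char_det S0 x lam" unfolding char_det_def
  proof (rule det_on_cong)
    fix t t' assume t: "t \<in> words S0" and t': "t' \<in> words S0"
    have "?h t = ?h t' \<longleftrightarrow> t = t'" using block_key_canon_word(4)[OF S vt[OF t] nrt[OF t]] block_key_canon_word(4)[OF S vt[OF t'] nrt[OF t']] by metis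
    moreover have "block_entry S x (?h t') (?h t) = tail_weight x t' t"
    proof -
      have "asc_len (?h t') \<noteq> length (?h t')" using block_key_canon_word(3)[OF S vt[OF t'] nrt[OF t']] by (auto simp: block_key_def split: if_splits)
      then show ?thesis unfolding block_entry_def using block_key_canon_word(4)[OF S vt[OF t] nrt[OF t]] block_key_canon_word(4)[OF S vt[OF t'] nrt[OF t']] by simp
    qed
    moreover have "tail_weight x t' t = prom_mat S0 x t t'" using tail_weight_eq_prom_mat[OF t finS0] .
    ultimately show "(if ?h t = ?h t' then lam else 0) - block_entry S x (?h t') (?h t) = (if t = t' then lam else 0) - prom_mat S0 x t t'"
      by simp
  qed
  finally show ?thesis .
qed

lemma det_block_None:
  assumes S: "S \<in> Up"
  shows "{v\<in>words S. block_key v = None} = {canon_word S []}" "canon_word S [] \<in> words S" "block_key (canon_word S []) = None"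
    "det_on {v\<in>words S. block_key v = None} (\<lambda>v w'. (if v = w' then lam else 0) - block_entry S x w' v) = lam - (\<Sum>i\<in>S. x i)"
proof -
  show w0: "canon_word S [] \<in> words S" using canon_word_words[OF S] Up_empty by (simp add: valid_suffix_def linext_word_def)
  have asc0: "asc_len (canon_word S []) = length (canon_word S [])" using asc_len_canon_word_Nil[OF S] length_words[OF w0] by simp
  show k0: "block_key (canon_word S []) = None" using asc0 by (simp add: block_key_def)
  show eq: "{v\<in>words S. block_key v = None} = {canon_word S []}"
  proof
    show "{v\<in>words S. block_key v = None} \<subseteq> {canon_word S []}"
    proof
      fix v assume "v \<in> {v\<in>words S. block_key v = None}"
      then have v: "v \<in> words S" and "asc_len v = length v" by (auto simp: block_key_def split: if_splits)
      then show "v \<in> {canon_word S []}" using canon_word_drop_asc_len[OF S v] by simp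
    qed
    show "{canon_word S []} \<subseteq> {v\<in>words S. block_key v = None}" using w0 k0 by simp
  qed
  show "det_on {v\<in>words S. block_key v = None} (\<lambda>v w'. (if v = w' then lam else 0) - block_entry S x w' v) = lam - (\<Sum>i\<in>S. x i)"
    unfolding eq using asc0 by (simp add: block_entry_def)
qed

definition addable_nonmax :: "nat set \<Rightarrow> nat set \<Rightarrow> nat set" where
  "addable_nonmax S S0 = {a \<in> S - S0. insert a S0 \<in> Up \<and> a \<noteq> Max (S - S0)}"

definition block_index :: "nat set \<Rightarrow> (nat set \<times> nat) set" where
  "block_index S = Sigma {S0 \<in> Up. S0 \<subseteq> S} (addable_nonmax S)"

lemma finite_Up: "finite Up"
proof -
  have "Up \<subseteq> Pow {1..n}" using Up_subset by auto
  then show ?thesis by (rule finite_subset) simp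
qed

lemma block_index_of_block_key:
  assumes S: "S \<in> Up" and v: "v \<in> words S" and kv: "block_key v = Some (a, S0)"
  shows "(S0, a) \<in> block_index S"
proof -
  note ks = block_key_Some[OF S v kv]
  obtain b where b: "b \<in> S - set (drop (asc_len v) v)" "hd (drop (asc_len v) v) < b"
    using ks(5) breaks_asc_def by auto
  have bS0: "b \<in> S - S0" and ab: "a < b" using b ks(3,4) by auto
  have "b \<le> Max (S - S0)" using bS0 Up_finite[OF S] by simp
  then have "a \<noteq> Max (S - S0)" using ab by simp
  then show ?thesis using ks(6-9) by (simp add: block_index_def addable_nonmax_def)
qed

lemma block_key_of_block_index:
  assumes S: "S \<in> Up" and aS0: "(S0, a) \<in> block_index S"
  shows "Some (a, S0) \<in> block_key ` words S"
proof -
  have finS: "finite S" using Up_finite[OF S] .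
  have S0U: "S0 \<in> Up" and S0S: "S0 \<subseteq> S" and aA: "a \<in> S - S0" "insert a S0 \<in> Up" "a \<noteq> Max (S - S0)"
    using aS0 by (auto simp: block_index_def addable_nonmax_def)
  have finS0: "finite S0" using Up_finite[OF S0U] .
  let ?t = "sorted_list_of_set S0"
  have vt: "valid_suffix S ?t" using sorted_linext_word[of ?t] S0U S0S finS0 by (simp add: valid_suffix_def)
  have vat: "valid_suffix S (a # ?t)" using valid_suffix_Cons[OF vt] aA finS0 by simp
  have mS: "Max (S - S0) \<in> S - S0" using aA(1) finS by (intro Max_in) auto
  have "a \<le> Max (S - S0)" using aA(1) finS by simp
  then have "a < Max (S - S0)" using aA(3) by simp
  then have nr: "breaks_asc S (a # ?t)" unfolding breaks_asc_def using mS aA(3) finS0 by auto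
  have "block_key (canon_word S (a # ?t)) = Some (a, S0)" using block_key_canon_word(3)[OF S vat nr] finS0 by simp
  then show ?thesis using block_key_canon_word(1)[OF S vat nr] by (metis image_eqI)
qed

lemma block_key_image:
  assumes S: "S \<in> Up"
  shows "block_key ` words S = insert None ((\<lambda>(S0, a). Some (a, S0)) ` block_index S)"
proof
  show "block_key ` words S \<subseteq> insert None ((\<lambda>(S0, a). Some (a, S0)) ` block_index S)"
  proof
    fix c assume "c \<in> block_key ` words S"
    then obtain v where v: "v \<in> words S" and c: "c = block_key v" by auto
    show "c \<in> insert None ((\<lambda>(S0, a). Some (a, S0)) ` block_index S)"
    proof (cases c)
      case (Some p)
      obtain a S0 where p: "p = (a, S0)" by (cases p)
      then have "(S0, a) \<in> block_index S" using block_index_of_block_key[OF S v] c Some by simp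
      then show ?thesis using Some p by force
    qed simp
  qed
  have "None \<in> block_key ` words S" using det_block_None(2,3)[OF S] by (metis image_eqI)
  then show "insert None ((\<lambda>(S0, a). Some (a, S0)) ` block_index S) \<subseteq> block_key ` words S"
    using block_key_of_block_index[OF S] by auto
qed

lemma char_det_rec:
  assumes S: "S \<in> Up"
  shows "char_det S x lam = (lam - (\<Sum>i\<in>S. x i)) * (\<Prod>S0\<in>{S0\<in>Up. S0 \<subseteq> S}. char_det S0 x lam ^ card (addable_nonmax S S0))"
proof -
  let ?blk = "\<lambda>c. det_on {v\<in>words S. block_key v = c} (\<lambda>v w'. (if v = w' then lam else 0) - block_entry S x w' v)"
  let ?f = "\<lambda>(S0::nat set, a::nat). Some (a, S0)"
  have finS: "finite S" using Up_finite[OF S] .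
  have finA: "finite {S0 \<in> Up. S0 \<subseteq> S}" using finite_Up by simp
  have finAs: "\<forall>S0\<in>{S0 \<in> Up. S0 \<subseteq> S}. finite (addable_nonmax S S0)" using finS by (simp add: addable_nonmax_def)
  have finK: "finite (block_index S)" unfolding block_index_def using finA finAs by (intro finite_SigmaI) auto
  have inj: "inj_on ?f (block_index S)" by (auto simp: inj_on_def)
  have "char_det S x lam = (\<Prod>c\<in>block_key ` words S. ?blk c)" by (rule char_det_blocks[OF S])
  also have "\<dots> = ?blk None * (\<Prod>c\<in>?f ` block_index S. ?blk c)"
    unfolding block_key_image[OF S] using finK by (subst prod.insert) auto
  also have "(\<Prod>c\<in>?f ` block_index S. ?blk c) = (\<Prod>p\<in>block_index S. ?blk (?f p))"
    using prod.reindex[OF inj, of ?blk] by (simp add: comp_def)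
  also have "\<dots> = (\<Prod>p\<in>block_index S. char_det (fst p) x lam)"
  proof (rule prod.cong[OF refl])
    fix p assume p: "p \<in> block_index S"
    obtain S0 a where pe: "p = (S0, a)" by (cases p)
    have "Some (a, S0) \<in> block_key ` words S" using p pe block_key_image[OF S] by force
    then obtain v0 where "v0 \<in> words S" "block_key v0 = Some (a, S0)" by force
    then show "?blk (?f p) = char_det (fst p) x lam" using det_block_Some[OF S] pe by simp
  qed
  also have "\<dots> = (\<Prod>S0\<in>{S0 \<in> Up. S0 \<subseteq> S}. \<Prod>a\<in>addable_nonmax S S0. char_det S0 x lam)"
    unfolding block_index_def by (subst prod.Sigma[OF finA finAs]) (simp add: case_prod_beta)
  also have "\<dots> = (\<Prod>S0\<in>{S0 \<in> Up. S0 \<subseteq> S}. char_det S0 x lam ^ card (addable_nonmax S S0))" by simp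
  finally show ?thesis unfolding det_block_None(4)[OF S, of lam x] .
qed

text \<open>The exponent of \<open>\<lambda> - x\<^sub>T\<close> obtained by unrolling \<open>char_det_rec\<close>; the conjunct \<open>finite S\<close>
  only serves the termination proof.\<close>

function eig_mult :: "nat set \<Rightarrow> nat set \<Rightarrow> nat" where
  "eig_mult S T = (if T = S then 1 else 0) + (\<Sum>S0\<in>{S0\<in>Up. T \<subseteq> S0 \<and> S0 \<subset> S \<and> finite S}. card (addable_nonmax S S0) * eig_mult S0 T)"
  by auto
termination
  by (relation "measure (\<lambda>(S, T). card S)") (auto intro: psubset_card_mono)

declare eig_mult.simps[simp del]

lemma prod_power_sum_swap:
  fixes q :: "'b \<Rightarrow> 'a::comm_monoid_mult"
  assumes "finite A" and "finite B"
  shows "(\<Prod>a\<in>A. \<Prod>b\<in>{b\<in>B. r b a}. q b ^ e a b) = (\<Prod>b\<in>B. q b ^ (\<Sum>a\<in>{a\<in>A. r b a}. e a b))"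
  by (simp add: prod.swap_restrict[OF assms] power_sum)

lemma char_det_factor:
  assumes S: "S \<in> Up"
  shows "char_det S x lam = (\<Prod>T\<in>{T\<in>Up. T \<subseteq> S}. (lam - (\<Sum>i\<in>T. x i)) ^ eig_mult S T)"
  using S
proof (induction "card S" arbitrary: S rule: less_induct)
  case less
  have S: "S \<in> Up" using less.prems .
  have finS: "finite S" using Up_finite[OF S] .
  let ?q = "\<lambda>T. lam - (\<Sum>i\<in>T. x i)"
  let ?A = "{S0\<in>Up. S0 \<subset> S}"
  let ?B = "{T\<in>Up. T \<subseteq> S}"
  have finA: "finite ?A" and finB: "finite ?B" using finite_Up by auto
  have IH: "char_det S0 x lam = (\<Prod>T\<in>{T\<in>Up. T \<subseteq> S0}. ?q T ^ eig_mult S0 T)" if "S0 \<in> ?A" for S0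
    using less.hyps[of S0] that finS psubset_card_mono by blast
  have "char_det S x lam = ?q S * (\<Prod>S0\<in>?B. char_det S0 x lam ^ card (addable_nonmax S S0))" by (rule char_det_rec[OF S])
  also have "(\<Prod>S0\<in>?B. char_det S0 x lam ^ card (addable_nonmax S S0)) = (\<Prod>S0\<in>?A. char_det S0 x lam ^ card (addable_nonmax S S0))"
  proof -
    have "?B = insert S ?A" using S by auto
    moreover have "S \<notin> ?A" by simp
    moreover have "addable_nonmax S S = {}" by (simp add: addable_nonmax_def)
    ultimately show ?thesis using finA by simp
  qed
  also have "\<dots> = (\<Prod>S0\<in>?A. \<Prod>T\<in>{T\<in>?B. T \<subseteq> S0}. ?q T ^ (card (addable_nonmax S S0) * eig_mult S0 T))"
  proof (rule prod.cong[OF refl])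
    fix S0 assume S0: "S0 \<in> ?A"
    have "{T\<in>?B. T \<subseteq> S0} = {T\<in>Up. T \<subseteq> S0}" using S0 by auto
    then show "char_det S0 x lam ^ card (addable_nonmax S S0) = (\<Prod>T\<in>{T\<in>?B. T \<subseteq> S0}. ?q T ^ (card (addable_nonmax S S0) * eig_mult S0 T))"
      unfolding IH[OF S0] by (simp add: prod_power_distrib power_mult mult.commute)
  qed
  also have "\<dots> = (\<Prod>T\<in>?B. ?q T ^ (\<Sum>S0\<in>{S0\<in>?A. T \<subseteq> S0}. card (addable_nonmax S S0) * eig_mult S0 T))"
    by (rule prod_power_sum_swap[OF finA finB])
  also have "\<dots> = (\<Prod>T\<in>?B. ?q T ^ (\<Sum>S0\<in>{S0\<in>Up. T \<subseteq> S0 \<and> S0 \<subset> S \<and> finite S}. card (addable_nonmax S S0) * eig_mult S0 T))"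
  proof -
    have "{S0\<in>?A. T \<subseteq> S0} = {S0\<in>Up. T \<subseteq> S0 \<and> S0 \<subset> S \<and> finite S}" for T using finS by auto
    then show ?thesis by simp
  qed
  also have "?q S * \<dots> = (\<Prod>T\<in>?B. ?q T ^ eig_mult S T)"
  proof -
    have "(\<Prod>T\<in>?B. ?q T ^ eig_mult S T) = (\<Prod>T\<in>?B. ?q T ^ (if T = S then 1 else 0)) *
        (\<Prod>T\<in>?B. ?q T ^ (\<Sum>S0\<in>{S0\<in>Up. T \<subseteq> S0 \<and> S0 \<subset> S \<and> finite S}. card (addable_nonmax S S0) * eig_mult S0 T))"
      by (subst eig_mult.simps) (simp add: power_add prod.distrib)
    moreover have "(\<Prod>T\<in>?B. ?q T ^ (if T = S then 1 else 0)) = ?q S"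
      using finB S by (simp add: if_distrib prod.If_cases cong: if_cong)
    ultimately show ?thesis by simp
  qed
  finally show ?case .
qed

section \<open>Maximal chains and derangement numbers\<close>

lemma insert_Max_Up:
  assumes S: "S \<in> Up" and S0: "S0 \<in> Up" and sub: "S0 \<subset> S"
  shows "Max (S - S0) \<in> S - S0" "insert (Max (S - S0)) S0 \<in> Up"
proof -
  have finS: "finite S" using Up_finite[OF S] .
  have ne: "S - S0 \<noteq> {}" using sub by auto
  show mS: "Max (S - S0) \<in> S - S0" using finS ne by (intro Max_in) auto
  let ?m = "Max (S - S0)"
  show "insert ?m S0 \<in> Up" unfolding upper_sets_def
  proof (intro CollectI conjI ballI allI impI)
    show "insert ?m S0 \<subseteq> {1..n}" using Up_subset[OF S] Up_subset[OF S0] mS by auto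
    fix z y assume z: "z \<in> insert ?m S0" and zy: "R z y"
    show "y \<in> insert ?m S0"
    proof (cases "z = ?m")
      case True
      have yS: "y \<in> S" using Up_closed[OF S, of ?m y] mS zy True by auto
      show ?thesis
      proof (cases "y = ?m")
        case False
        then have "?m < y" using prec_less[of ?m y] zy True by (simp add: prec_def)
        then have "y \<notin> S - S0" using finS by (metis Max_ge finite_Diff leD)
        then show ?thesis using yS by simp
      qed simp
    next
      case False
      then have "z \<in> S0" using z by simp
      then show ?thesis using Up_closed[OF S0] zy by auto
    qed
  qed
qed

definition addable :: "nat set \<Rightarrow> nat set \<Rightarrow> nat set" where
  "addable S S0 = {a \<in> S - S0. insert a S0 \<in> Up}"

lemma card_addable_nonmax:
  assumes S: "S \<in> Up" and S0: "S0 \<in> Up" and sub: "S0 \<subset> S"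
  shows "int (card (addable_nonmax S S0)) = int (card (addable S S0)) - 1" "card (addable S S0) \<ge> 1"
proof -
  have finS: "finite S" using Up_finite[OF S] .
  have mA: "Max (S - S0) \<in> addable S S0" using insert_Max_Up[OF S S0 sub] by (simp add: addable_def)
  have finA: "finite (addable S S0)" using finS by (simp add: addable_def)
  show c1: "card (addable S S0) \<ge> 1" using mA finA by (metis One_nat_def Suc_leI card_gt_0_iff empty_iff)
  have "addable_nonmax S S0 = addable S S0 - {Max (S - S0)}" by (auto simp: addable_nonmax_def addable_def)
  then have "card (addable_nonmax S S0) = card (addable S S0) - 1" using mA finA by (simp add: card_Diff_singleton)
  then show "int (card (addable_nonmax S S0)) = int (card (addable S S0)) - 1" using c1 by (simp add: of_nat_diff)
qed

abbreviation "mchains T S \<equiv> maximal_chains Up T S"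

lemma finite_lat_interval: "finite (lat_interval Up T S)"
  unfolding lat_interval_def using finite_Up by simp

lemma finite_mchains: "finite (mchains T S)"
proof -
  have "mchains T S \<subseteq> Pow (lat_interval Up T S)" unfolding maximal_chains_def by auto
  then show ?thesis using finite_lat_interval by (meson finite_Pow_iff finite_subset)
qed

lemma mchains_endpoints:
  assumes T: "T \<in> Up" and S: "S \<in> Up" and TS: "T \<subseteq> S" and C: "C \<in> mchains T S"
  shows "S \<in> C" "T \<in> C"
proof -
  have Ci: "C \<subseteq> lat_interval Up T S" and Cc: "is_chain C"
    and Cm: "\<And>C'. C \<subseteq> C' \<Longrightarrow> C' \<subseteq> lat_interval Up T S \<Longrightarrow> is_chain C' \<Longrightarrow> C' = C"
    using C unfolding maximal_chains_def by auto
  have "insert S C = C"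
  proof (rule Cm)
    show "insert S C \<subseteq> lat_interval Up T S" using Ci S TS by (auto simp: lat_interval_def)
    show "is_chain (insert S C)" using Cc Ci unfolding is_chain_def lat_interval_def by blast
  qed auto
  then show "S \<in> C" by blast
  have "insert T C = C"
  proof (rule Cm)
    show "insert T C \<subseteq> lat_interval Up T S" using Ci T TS by (auto simp: lat_interval_def)
    show "is_chain (insert T C)" using Cc Ci unfolding is_chain_def lat_interval_def by blast
  qed auto
  then show "T \<in> C" by blast
qed

lemma mchains_refl: assumes T: "T \<in> Up" shows "mchains T T = {{T}}"
proof
  show "mchains T T \<subseteq> {{T}}"
  proof
    fix C assume C: "C \<in> mchains T T"
    then have "C \<subseteq> {T}" unfolding maximal_chains_def lat_interval_def by auto
    moreover have "T \<in> C" using mchains_endpoints[OF T T _ C] by simp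
    ultimately show "C \<in> {{T}}" by auto
  qed
  show "{{T}} \<subseteq> mchains T T"
    unfolding maximal_chains_def lat_interval_def is_chain_def using T by auto
qed

definition removable :: "nat set \<Rightarrow> nat set \<Rightarrow> nat set" where
  "removable T S = {b \<in> S. S - {b} \<in> Up \<and> T \<subseteq> S - {b}}"

lemma mchains_insert_top:
  assumes T: "T \<in> Up" and S: "S \<in> Up" and TS: "T \<subseteq> S"
    and b: "b \<in> removable T S" and C: "C \<in> mchains T (S - {b})"
  shows "insert S C \<in> mchains T S"
proof -
  have bS: "b \<in> S" "S - {b} \<in> Up" "T \<subseteq> S - {b}" using b by (auto simp: removable_def)
  have Ci: "C \<subseteq> lat_interval Up T (S - {b})" and Cc: "is_chain C"
    and Cmax: "\<And>C'. C \<subseteq> C' \<Longrightarrow> C' \<subseteq> lat_interval Up T (S - {b}) \<Longrightarrow> is_chain C' \<Longrightarrow> C' = C"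
    using C unfolding maximal_chains_def by auto
  have notS: "S \<notin> C" using Ci bS(1) by (auto simp: lat_interval_def)
  have Sb: "S - {b} \<in> C" using mchains_endpoints(1)[OF T bS(2) bS(3) C] .
  show ?thesis unfolding maximal_chains_def
  proof (intro CollectI conjI allI impI)
    show "insert S C \<subseteq> lat_interval Up T S" using Ci S TS by (auto simp: lat_interval_def)
    show "is_chain (insert S C)" using Cc Ci unfolding is_chain_def lat_interval_def by blast
    fix D assume D: "insert S C \<subseteq> D \<and> D \<subseteq> lat_interval Up T S \<and> is_chain D"
    have D1: "insert S C \<subseteq> D" and D2: "D \<subseteq> lat_interval Up T S" and D3: "is_chain D" using D by auto
    have Dsub: "D - {S} \<subseteq> lat_interval Up T (S - {b})"
    proof
      fix X assume X: "X \<in> D - {S}"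
      have XU: "X \<in> Up" "T \<subseteq> X" "X \<subseteq> S" using D2 X by (auto simp: lat_interval_def)
      have SbD: "S - {b} \<in> D" using Sb D1 by blast
      have "X \<in> D" using X by simp
      then have "X \<subseteq> S - {b} \<or> S - {b} \<subseteq> X"
        using bspec[OF bspec[OF D3[unfolded is_chain_def]] SbD] by blast
      moreover have "X \<subseteq> S - {b}" if "S - {b} \<subseteq> X"
      proof -
        have "b \<notin> X"
        proof
          assume "b \<in> X"
          then have "S \<subseteq> X" using that by blast
          then have "X = S" using subset_antisym[OF XU(3)] by blast
          then show False using X by simp
        qed
        then show ?thesis using XU(3) by blast
      qed
      ultimately have "X \<subseteq> S - {b}" by blast
      then show "X \<in> lat_interval Up T (S - {b})" using XU by (simp add: lat_interval_def)
    qed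
    have "D - {S} = C"
    proof (rule Cmax)
      show "C \<subseteq> D - {S}" using D1 notS by blast
      show "is_chain (D - {S})" using D3 unfolding is_chain_def by blast
    qed (use Dsub in simp)
    then show "D = insert S C" using D1 by blast
  qed
qed

lemma mchains_top_step:
  assumes S: "S \<in> Up" and M: "M \<in> Up" "M \<subset> S" "T \<subseteq> M"
    and D: "D \<in> mchains T S" "M \<in> D" and below: "\<forall>X\<in>D - {S}. X \<subseteq> M"
  shows "\<exists>b. S - M = {b}"
proof (rule ccontr)
  assume nb: "\<not> (\<exists>b. S - M = {b})"
  let ?m = "Max (S - M)"
  have Di: "D \<subseteq> lat_interval Up T S" and Dc: "is_chain D"
    and Dmax: "\<And>C'. D \<subseteq> C' \<Longrightarrow> C' \<subseteq> lat_interval Up T S \<Longrightarrow> is_chain C' \<Longrightarrow> C' = D"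
    using D(1) unfolding maximal_chains_def by auto
  have m1: "?m \<in> S - M" and m2: "insert ?m M \<in> Up" using insert_Max_Up[OF S M(1,2)] by auto
  have neq: "insert ?m M \<noteq> S" using nb m1 by auto
  have "insert (insert ?m M) D = D"
  proof (rule Dmax)
    show "insert (insert ?m M) D \<subseteq> lat_interval Up T S"
      using Di m1 m2 M by (auto simp: lat_interval_def)
    have "X \<subseteq> insert ?m M \<or> insert ?m M \<subseteq> X" if X: "X \<in> D" for X
    proof (cases "X = S")
      case True then show ?thesis using m1 M(2) by auto
    next
      case False then show ?thesis using below X by blast
    qed
    then show "is_chain (insert (insert ?m M) D)" using Dc unfolding is_chain_def by blast
  qed auto
  then have "insert ?m M \<in> D - {S}" using neq by blast
  then have "insert ?m M \<subseteq> M" using below by blast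
  then show False using m1 by blast
qed

lemma mchains_remove_top:
  assumes T: "T \<in> Up" and S: "S \<in> Up" and TS: "T \<subset> S" and D: "D \<in> mchains T S"
  obtains b where "b \<in> removable T S" "D - {S} \<in> mchains T (S - {b})" "D = insert S (D - {S})"
proof -
  have Di: "D \<subseteq> lat_interval Up T S" and Dc: "is_chain D"
    and Dmax: "\<And>C'. D \<subseteq> C' \<Longrightarrow> C' \<subseteq> lat_interval Up T S \<Longrightarrow> is_chain C' \<Longrightarrow> C' = D"
    using D unfolding maximal_chains_def by auto
  have SD: "S \<in> D" and TD: "T \<in> D" using mchains_endpoints[OF T S _ D] TS by auto
  let ?C = "D - {S}"
  have finC: "finite ?C" using Di finite_lat_interval finite_subset by blast
  have neC: "?C \<noteq> {}" using TD TS by auto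
  have chC: "is_chain ?C" using Dc unfolding is_chain_def by blast
  have finE: "\<forall>X\<in>?C. finite X" using Di Up_finite by (auto simp: lat_interval_def)
  obtain M where M: "M \<in> ?C" "\<forall>X\<in>?C. X \<subseteq> M" using chain_has_greatest[OF finC neC chC finE] by blast
  have MU: "M \<in> Up" and MS: "M \<subset> S" and TM: "T \<subseteq> M" using M Di by (auto simp: lat_interval_def)
  obtain b where b: "S - M = {b}" using mchains_top_step[OF S MU MS TM D] M by blast
  have Mb: "M = S - {b}" using b MS by blast
  have "b \<in> removable T S" using b Mb MU TM by (auto simp: removable_def)
  moreover have "?C \<in> mchains T (S - {b})" unfolding maximal_chains_def
  proof (intro CollectI conjI allI impI)
    show "?C \<subseteq> lat_interval Up T (S - {b})" using Di M(2) Mb by (auto simp: lat_interval_def)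
    show "is_chain ?C" by (rule chC)
    fix C' assume C': "?C \<subseteq> C' \<and> C' \<subseteq> lat_interval Up T (S - {b}) \<and> is_chain C'"
    have "b \<in> S" using b by blast
    then have SC': "S \<notin> C'" using C' by (auto simp: lat_interval_def)
    have "insert S C' = D"
    proof (rule Dmax)
      show "D \<subseteq> insert S C'" using C' by blast
      show "insert S C' \<subseteq> lat_interval Up T S" using C' S TS by (auto simp: lat_interval_def)
      show "is_chain (insert S C')" using C' unfolding is_chain_def lat_interval_def by blast
    qed
    then show "C' = ?C" using SC' by blast
  qed
  moreover have "D = insert S ?C" using SD by blast
  ultimately show ?thesis using that by blast
qed

lemma card_mchains_rec:
  assumes T: "T \<in> Up" and S: "S \<in> Up" and TS: "T \<subset> S"
  shows "card (mchains T S) = (\<Sum>b\<in>removable T S. card (mchains T (S - {b})))"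
proof -
  let ?F = "\<lambda>(b::nat, C::nat set set). insert S C"
  let ?Sig = "Sigma (removable T S) (\<lambda>b. mchains T (S - {b}))"
  have notS: "S \<notin> C" if "C \<in> mchains T (S - {b})" "b \<in> S" for b C
    using that unfolding maximal_chains_def lat_interval_def by auto
  have "inj_on ?F ?Sig"
  proof (rule inj_onI, clarify)
    fix b C b' C'
    assume b: "b \<in> removable T S" and C: "C \<in> mchains T (S - {b})"
      and b': "b' \<in> removable T S" and C': "C' \<in> mchains T (S - {b'})"
      and eq: "insert S C = insert S C'"
    have bS: "b \<in> S" "b' \<in> S" "S - {b} \<in> Up" "S - {b'} \<in> Up" "T \<subseteq> S - {b}" "T \<subseteq> S - {b'}"
      using b b' by (auto simp: removable_def)
    have "C = C'" using eq notS[OF C bS(1)] notS[OF C' bS(2)] by (metis insert_ident)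
    moreover have "S - {b} \<in> C" using mchains_endpoints(1)[OF T bS(3) bS(5) C] .
    moreover have "S - {b'} \<in> C'" using mchains_endpoints(1)[OF T bS(4) bS(6) C'] .
    moreover have "is_chain C" using C unfolding maximal_chains_def by simp
    ultimately have "S - {b} \<subseteq> S - {b'} \<or> S - {b'} \<subseteq> S - {b}" unfolding is_chain_def by simp
    moreover have "S - {b} \<subseteq> S - {b'} \<Longrightarrow> b = b'" using bS(2) by blast
    moreover have "S - {b'} \<subseteq> S - {b} \<Longrightarrow> b = b'" using bS(1) by blast
    ultimately have "b = b'" by blast
    then show "b = b' \<and> C = C'" using \<open>C = C'\<close> by simp
  qed
  moreover have "?F ` ?Sig = mchains T S"
  proof
    show "?F ` ?Sig \<subseteq> mchains T S" using mchains_insert_top[OF T S] TS by auto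
    show "mchains T S \<subseteq> ?F ` ?Sig"
    proof
      fix D assume "D \<in> mchains T S"
      then obtain b where "b \<in> removable T S" "D - {S} \<in> mchains T (S - {b})" "D = insert S (D - {S})"
        using mchains_remove_top[OF T S TS] by blast
      then show "D \<in> ?F ` ?Sig" by (intro image_eqI[where x = "(b, D - {S})"]) auto
    qed
  qed
  ultimately have "bij_betw ?F ?Sig (mchains T S)" unfolding bij_betw_def ..
  then have "card (mchains T S) = card ?Sig" by (rule bij_betw_same_card[symmetric])
  also have "\<dots> = (\<Sum>b\<in>removable T S. card (mchains T (S - {b})))"
    by (rule card_SigmaI) (use Up_finite[OF S] finite_mchains in \<open>auto simp: removable_def\<close>)
  finally show ?thesis .
qed

lemma sum_addable_eq_sum_removable:
  fixes g :: "nat set \<Rightarrow> 'b::comm_monoid_add"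
  assumes S: "S \<in> Up"
  shows "(\<Sum>S0\<in>{S0\<in>Up. T \<subseteq> S0 \<and> S0 \<subset> S}. \<Sum>a\<in>addable S S0. g S0)
       = (\<Sum>S1\<in>{S1\<in>Up. T \<subset> S1 \<and> S1 \<subseteq> S}. \<Sum>b\<in>removable T S1. g (S1 - {b}))"
proof -
  let ?Ilo = "{S0\<in>Up. T \<subseteq> S0 \<and> S0 \<subset> S}"
  let ?Ihi = "{S1\<in>Up. T \<subset> S1 \<and> S1 \<subseteq> S}"
  have finLo: "finite ?Ilo" and finHi: "finite ?Ihi" using finite_Up by auto
  have finAdd: "\<forall>S0\<in>?Ilo. finite (addable S S0)" using Up_finite[OF S] by (simp add: addable_def)
  have finRem: "\<forall>S1\<in>?Ihi. finite (removable T S1)" using Up_finite by (auto simp: removable_def)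
  have bij: "bij_betw (\<lambda>(S0, a). (insert a S0, a)) (Sigma ?Ilo (addable S)) (Sigma ?Ihi (removable T))"
    by (rule bij_betw_byWitness[where f' = "\<lambda>(S1, b). (S1 - {b}, b)"])
      (auto simp: addable_def removable_def insert_absorb)
  have "(\<Sum>S0\<in>?Ilo. \<Sum>a\<in>addable S S0. g S0) = (\<Sum>(S0, a)\<in>Sigma ?Ilo (addable S). g S0)"
    by (rule sum.Sigma[OF finLo finAdd])
  also have "\<dots> = (\<Sum>(S0, a)\<in>Sigma ?Ilo (addable S). (\<lambda>(S1, b). g (S1 - {b})) (insert a S0, a))"
    by (rule sum.cong) (auto simp: addable_def)
  also have "\<dots> = (\<Sum>(S1, b)\<in>Sigma ?Ihi (removable T). g (S1 - {b}))"
    using sum.reindex_bij_betw[OF bij, of "\<lambda>(S1, b). g (S1 - {b})"] by (simp add: case_prod_beta)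
  also have "\<dots> = (\<Sum>S1\<in>?Ihi. \<Sum>b\<in>removable T S1. g (S1 - {b}))"
    by (rule sum.Sigma[OF finHi finRem, symmetric])
  finally show ?thesis .
qed

lemma card_mchains_addable_rec:
  assumes T: "T \<in> Up" and S: "S \<in> Up" and TS: "T \<subset> S"
  shows "int (card (mchains T S)) = 1 + (\<Sum>S0\<in>{S0\<in>Up. T \<subseteq> S0 \<and> S0 \<subset> S}. int (card (addable_nonmax S S0)) * int (card (mchains T S0)))"
proof -
  let ?f = "\<lambda>X. int (card (mchains T X))"
  let ?I = "{X\<in>Up. T \<subseteq> X \<and> X \<subseteq> S}"
  let ?Ilo = "{S0\<in>Up. T \<subseteq> S0 \<and> S0 \<subset> S}"
  let ?Ihi = "{S1\<in>Up. T \<subset> S1 \<and> S1 \<subseteq> S}"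
  have finI: "finite ?I" using finite_Up by auto
  have hi: "sum ?f ?Ihi = sum ?f ?I - ?f T"
  proof -
    have "?Ihi = ?I - {T}" using TS by auto
    moreover have "T \<in> ?I" using T TS by auto
    ultimately show ?thesis using finI by (simp add: sum_diff1)
  qed
  have lo: "sum ?f ?Ilo = sum ?f ?I - ?f S"
  proof -
    have "?Ilo = ?I - {S}" using TS by auto
    moreover have "S \<in> ?I" using S TS by auto
    ultimately show ?thesis using finI by (simp add: sum_diff1)
  qed
  have fT: "?f T = 1" using mchains_refl[OF T] by simp
  have "(\<Sum>S0\<in>?Ilo. int (card (addable S S0)) * ?f S0) = (\<Sum>S0\<in>?Ilo. \<Sum>a\<in>addable S S0. ?f S0)" by simp
  also have "\<dots> = (\<Sum>S1\<in>?Ihi. \<Sum>b\<in>removable T S1. ?f (S1 - {b}))"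
    by (rule sum_addable_eq_sum_removable[OF S])
  also have "\<dots> = sum ?f ?Ihi"
  proof (rule sum.cong[OF refl])
    fix S1 assume "S1 \<in> ?Ihi"
    then have "S1 \<in> Up" "T \<subset> S1" by auto
    then show "(\<Sum>b\<in>removable T S1. ?f (S1 - {b})) = ?f S1" using card_mchains_rec[OF T] by (simp add: of_nat_sum)
  qed
  finally have addf: "(\<Sum>S0\<in>?Ilo. int (card (addable S S0)) * ?f S0) = sum ?f ?Ihi" .
  have "(\<Sum>S0\<in>?Ilo. int (card (addable_nonmax S S0)) * ?f S0) = (\<Sum>S0\<in>?Ilo. int (card (addable S S0)) * ?f S0 - ?f S0)"
  proof (rule sum.cong[OF refl])
    fix S0 assume "S0 \<in> ?Ilo"
    then have e: "int (card (addable S S0)) = int (card (addable_nonmax S S0)) + 1" using card_addable_nonmax(1)[OF S] by simp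
    show "int (card (addable_nonmax S S0)) * ?f S0 = int (card (addable S S0)) * ?f S0 - ?f S0"
      unfolding e by (simp add: algebra_simps)
  qed
  also have "\<dots> = sum ?f ?Ihi - sum ?f ?Ilo" using addf by (simp add: sum_subtractf)
  also have "\<dots> = ?f S - 1" using hi lo fT by simp
  finally show ?thesis by simp
qed

lemma sum_eig_mult_rec:
  assumes S: "S \<in> Up" and TS: "T \<subset> S"
  shows "(\<Sum>T'\<in>{T'\<in>Up. T \<subseteq> T' \<and> T' \<subseteq> S}. int (eig_mult S T'))
       = 1 + (\<Sum>S0\<in>{S0\<in>Up. T \<subseteq> S0 \<and> S0 \<subset> S}. int (card (addable_nonmax S S0))
                * (\<Sum>T'\<in>{T'\<in>Up. T \<subseteq> T' \<and> T' \<subseteq> S0}. int (eig_mult S0 T')))"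
proof -
  have finS: "finite S" using Up_finite[OF S] .
  let ?I = "{T'\<in>Up. T \<subseteq> T' \<and> T' \<subseteq> S}"
  let ?B = "{S0\<in>Up. S0 \<subset> S}"
  let ?Ilo = "{S0\<in>Up. T \<subseteq> S0 \<and> S0 \<subset> S}"
  let ?g = "\<lambda>S0 T'. int (card (addable_nonmax S S0)) * int (eig_mult S0 T')"
  have finI: "finite ?I" and finB: "finite ?B" using finite_Up by auto
  have "(\<Sum>T'\<in>?I. int (eig_mult S T')) = (\<Sum>T'\<in>?I. (if T' = S then 1 else 0) + (\<Sum>S0\<in>{S0\<in>?B. T' \<subseteq> S0}. ?g S0 T'))"
  proof (rule sum.cong[OF refl])
    fix T' assume "T' \<in> ?I"
    have "{S0\<in>Up. T' \<subseteq> S0 \<and> S0 \<subset> S \<and> finite S} = {S0\<in>?B. T' \<subseteq> S0}" using finS by auto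
    then show "int (eig_mult S T') = (if T' = S then 1 else 0) + (\<Sum>S0\<in>{S0\<in>?B. T' \<subseteq> S0}. ?g S0 T')"
      by (subst eig_mult.simps) (simp add: of_nat_sum)
  qed
  also have "\<dots> = 1 + (\<Sum>T'\<in>?I. \<Sum>S0\<in>{S0\<in>?B. T' \<subseteq> S0}. ?g S0 T')"
    using finI S TS by (simp add: sum.distrib)
  also have "(\<Sum>T'\<in>?I. \<Sum>S0\<in>{S0\<in>?B. T' \<subseteq> S0}. ?g S0 T') = (\<Sum>S0\<in>?B. \<Sum>T'\<in>{T'\<in>?I. T' \<subseteq> S0}. ?g S0 T')"
    by (rule sum.swap_restrict[OF finI finB])
  also have "\<dots> = (\<Sum>S0\<in>?Ilo. \<Sum>T'\<in>{T'\<in>?I. T' \<subseteq> S0}. ?g S0 T')"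
  proof (rule sum.mono_neutral_right[OF finB])
    show "\<forall>S0\<in>?B - ?Ilo. (\<Sum>T'\<in>{T'\<in>?I. T' \<subseteq> S0}. ?g S0 T') = 0"
    proof
      fix S0 assume "S0 \<in> ?B - ?Ilo"
      then have no_lower: "{T'\<in>?I. T' \<subseteq> S0} = {}" by blast
      show "(\<Sum>T'\<in>{T'\<in>?I. T' \<subseteq> S0}. ?g S0 T') = 0" unfolding no_lower by simp
    qed
  qed auto
  also have "\<dots> = (\<Sum>S0\<in>?Ilo. int (card (addable_nonmax S S0)) * (\<Sum>T'\<in>{T'\<in>Up. T \<subseteq> T' \<and> T' \<subseteq> S0}. int (eig_mult S0 T')))"
  proof (rule sum.cong[OF refl])
    fix S0 assume "S0 \<in> ?Ilo"
    then have "{T'\<in>?I. T' \<subseteq> S0} = {T'\<in>Up. T \<subseteq> T' \<and> T' \<subseteq> S0}" by auto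
    then show "(\<Sum>T'\<in>{T'\<in>?I. T' \<subseteq> S0}. ?g S0 T')
        = int (card (addable_nonmax S S0)) * (\<Sum>T'\<in>{T'\<in>Up. T \<subseteq> T' \<and> T' \<subseteq> S0}. int (eig_mult S0 T'))"
      by (simp add: sum_distrib_left)
  qed
  finally show ?thesis .
qed

text \<open>Both sides obey the recursion of \<open>card_mchains_addable_rec\<close>.\<close>

lemma card_mchains_eq_sum_eig_mult:
  assumes T: "T \<in> Up" and S: "S \<in> Up" and TS: "T \<subseteq> S"
  shows "int (card (mchains T S)) = (\<Sum>T'\<in>{T'\<in>Up. T \<subseteq> T' \<and> T' \<subseteq> S}. int (eig_mult S T'))"
  using S TS
proof (induction "card S" arbitrary: S rule: less_induct)
  case less
  have S: "S \<in> Up" and TS: "T \<subseteq> S" using less.prems by auto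
  show ?case
  proof (cases "T = S")
    case True
    have "{T'\<in>Up. T \<subseteq> T' \<and> T' \<subseteq> S} = {S}" using True S by auto
    moreover have "eig_mult S S = 1" by (subst eig_mult.simps) (auto intro!: sum.neutral)
    ultimately show ?thesis using mchains_refl[OF T] True by simp
  next
    case False
    then have TS': "T \<subset> S" using TS by auto
    have IH: "int (card (mchains T S0)) = (\<Sum>T'\<in>{T'\<in>Up. T \<subseteq> T' \<and> T' \<subseteq> S0}. int (eig_mult S0 T'))"
      if "S0 \<in> {S0\<in>Up. T \<subseteq> S0 \<and> S0 \<subset> S}" for S0
      using less.hyps[of S0] that Up_finite[OF S] psubset_card_mono by auto
    show ?thesis
      unfolding sum_eig_mult_rec[OF S TS'] card_mchains_addable_rec[OF T S TS'] using IH by simp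
  qed
qed

lemma sum_mobius_interval:
  assumes T: "T \<in> Up" and T2: "T2 \<in> Up" and TT: "T \<subseteq> T2"
  shows "(\<Sum>T'\<in>{T'\<in>Up. T \<subseteq> T' \<and> T' \<subseteq> T2}. mobius Up T T') = (if T = T2 then 1 else 0)"
proof (cases "T = T2")
  case True
  then have "{T'\<in>Up. T \<subseteq> T' \<and> T' \<subseteq> T2} = {T}" using T by auto
  then show ?thesis using True by simp
next
  case False
  then have TT': "T \<subset> T2" using TT by auto
  have fin2: "finite T2" using Up_finite[OF T2] .
  let ?J = "{U'\<in>Up. T \<subseteq> U' \<and> U' \<subset> T2}"
  have finJ: "finite ?J" using finite_Up by simp
  have m: "mobius Up T T2 = - (\<Sum>U'\<in>?J. mobius Up T U')"
    using TT' fin2 False by (subst mobius.simps) simp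
  have "{T'\<in>Up. T \<subseteq> T' \<and> T' \<subseteq> T2} = insert T2 ?J" using T2 TT by auto
  then show ?thesis using m finJ False by simp
qed

lemma derangement_number_eq_eig_mult:
  assumes T: "T \<in> Up"
  shows "derangement_number n R T = int (eig_mult {1..n} T)"
proof -
  let ?P = "{1..n}"
  have P: "?P \<in> Up" using Up_top .
  have subP: "\<And>X. X \<in> Up \<Longrightarrow> X \<subseteq> ?P" using Up_subset by blast
  let ?A = "{T'\<in>Up. T \<subseteq> T'}"
  have finA: "finite ?A" using finite_Up by simp
  have "derangement_number n R T = (\<Sum>T'\<in>?A. mobius Up T T' * int (card (mchains T' ?P)))"
    unfolding derangement_number_def Let_def by simp
  also have "\<dots> = (\<Sum>T'\<in>?A. \<Sum>T2\<in>{T2\<in>?A. T' \<subseteq> T2}. mobius Up T T' * int (eig_mult ?P T2))"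
  proof (rule sum.cong[OF refl])
    fix T' assume T': "T' \<in> ?A"
    have "{T2\<in>Up. T' \<subseteq> T2 \<and> T2 \<subseteq> ?P} = {T2\<in>?A. T' \<subseteq> T2}" using T' subP by auto
    then show "mobius Up T T' * int (card (mchains T' ?P)) = (\<Sum>T2\<in>{T2\<in>?A. T' \<subseteq> T2}. mobius Up T T' * int (eig_mult ?P T2))"
      using card_mchains_eq_sum_eig_mult[of T' ?P] T' P subP by (simp add: sum_distrib_left)
  qed
  also have "\<dots> = (\<Sum>T2\<in>?A. \<Sum>T'\<in>{T'\<in>?A. T' \<subseteq> T2}. mobius Up T T' * int (eig_mult ?P T2))"
    by (rule sum.swap_restrict[OF finA finA])
  also have "\<dots> = (\<Sum>T2\<in>?A. (if T = T2 then 1 else 0) * int (eig_mult ?P T2))"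
  proof (rule sum.cong[OF refl])
    fix T2 assume T2: "T2 \<in> ?A"
    have "{T'\<in>?A. T' \<subseteq> T2} = {T'\<in>Up. T \<subseteq> T' \<and> T' \<subseteq> T2}" by auto
    then show "(\<Sum>T'\<in>{T'\<in>?A. T' \<subseteq> T2}. mobius Up T T' * int (eig_mult ?P T2)) = (if T = T2 then 1 else 0) * int (eig_mult ?P T2)"
      using sum_mobius_interval[OF T] T2 by (simp add: sum_distrib_right[symmetric])
  qed
  also have "\<dots> = (\<Sum>T2\<in>?A. (if T = T2 then int (eig_mult ?P T2) else 0))"
    by (rule sum.cong[OF refl]) simp
  also have "\<dots> = int (eig_mult ?P T)" using finA T by (simp add: sum.delta)
  finally show ?thesis .
qed

section \<open>Linear extensions as words\<close>

lemma word_of_partial: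
  assumes "1 \<le> j" "j \<le> n" and that: "inj_on \<pi> {1..n}"
  shows "word_of n (partial n R j \<pi>) = promote R (\<pi> j) (word_of n \<pi>)"
proof -
  have split: "word_of n \<pi> = map \<pi> [1..<j] @ \<pi> j # map \<pi> [Suc j..<Suc n]"
  proof -
    have e1: "[1..<Suc n] = [1..<j] @ [j..<Suc n]" using assms upt_add_eq_append[of 1 j "Suc n - j"] by simp
    have e2: "[j..<Suc n] = j # [Suc j..<Suc n]" using assms by (simp add: upt_conv_Cons)
    have "[1..<Suc n] = [1..<j] @ j # [Suc j..<Suc n]" using e1 e2 by simp
    then show ?thesis unfolding word_of_def by simp
  qed
  have ni: "\<pi> j \<notin> set (map \<pi> [1..<j])"
  proof
    assume "\<pi> j \<in> set (map \<pi> [1..<j])"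
    then obtain k where k: "k \<in> {1..<j}" "\<pi> k = \<pi> j" by auto
    have "k \<in> {1..n}" "j \<in> {1..n}" using k assms by auto
    then have "k = j" using inj_onD[OF that k(2)] by blast
    then show False using k by simp
  qed
  have "promote R (\<pi> j) (word_of n \<pi>) = map \<pi> [1..<j] @ bubble R (\<pi> j # map \<pi> [Suc j..<Suc n])"
    unfolding split by (rule promote_split[OF ni])
  also have "\<pi> j # map \<pi> [Suc j..<Suc n] = map \<pi> [j..<Suc n]"
  proof -
    have "[j..<Suc n] = j # [Suc j..<Suc n]" using assms by (simp add: upt_conv_Cons)
    then show ?thesis by simp
  qed
  finally show ?thesis unfolding word_of_def partial_def using word_fold_tau[OF assms(1,2)] by simp
qed

lemma partial_outside: "1 \<le> j \<Longrightarrow> k \<notin> {1..n} \<Longrightarrow> partial n R j \<pi> k = \<pi> k"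
  unfolding partial_def by (rule fold_tau_outside) auto

definition perm_of_word :: "nat list \<Rightarrow> nat \<Rightarrow> nat" where
  "perm_of_word w = (\<lambda>k. if k \<in> {1..n} then w ! (k - 1) else k)"

lemma word_of_inj: "\<forall>k. k \<notin> {1..n} \<longrightarrow> \<pi> k = k \<Longrightarrow> \<forall>k. k \<notin> {1..n} \<longrightarrow> \<pi>' k = k \<Longrightarrow> word_of n \<pi> = word_of n \<pi>' \<Longrightarrow> \<pi> = \<pi>'"
proof
  fix k assume o1: "\<forall>k. k \<notin> {1..n} \<longrightarrow> \<pi> k = k" and o2: "\<forall>k. k \<notin> {1..n} \<longrightarrow> \<pi>' k = k"
    and eq: "word_of n \<pi> = word_of n \<pi>'"
  show "\<pi> k = \<pi>' k"
  proof (cases "k \<in> {1..n}")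
    case True
    then have "word_of n \<pi> ! (k - 1) = \<pi> k" "word_of n \<pi>' ! (k - 1) = \<pi>' k" using nth_word_of by blast+
    then show ?thesis using eq by simp
  next
    case False then show ?thesis using o1 o2 by simp
  qed
qed

lemma word_of_lin_ext:
  assumes pl: "\<pi> \<in> lin_ext n R"
  shows "word_of n \<pi> \<in> words {1..n}"
proof -
  define w where "w = word_of n \<pi>"
  have p: "\<pi> permutes {1..n}" and ord: "\<forall>i j. prec R i j \<longrightarrow> Hilbert_Choice.inv \<pi> i < Hilbert_Choice.inv \<pi> j"
    using pl by (auto simp: lin_ext_def)
  have inj: "inj_on \<pi> {1..n}" using permutes_inj[OF p] by (simp add: inj_on_def inj_def)
  have su: "set [1..<Suc n] = {1..n}" by auto
  have dis: "distinct w" unfolding w_def word_of_def distinct_map using inj su by simp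
  have st: "set w = {1..n}" unfolding w_def word_of_def set_map su using permutes_image[OF p] by simp
  have "sorted_wrt (\<lambda>a b. \<not> prec R b a) w"
    unfolding sorted_wrt_iff_nth_less
  proof (intro allI impI notI)
    fix p q assume pq: "p < q" "q < length w" and pr: "prec R (w ! q) (w ! p)"
    have wl: "length w = n" unfolding w_def word_of_def by simp
    have "w ! q = \<pi> (Suc q)" "w ! p = \<pi> (Suc p)" using pq wl nth_word_of[of "Suc q" n \<pi>] nth_word_of[of "Suc p" n \<pi>] unfolding w_def by auto
    then have "Hilbert_Choice.inv \<pi> (\<pi> (Suc q)) < Hilbert_Choice.inv \<pi> (\<pi> (Suc p))" using ord pr by simp
    then show False using pq permutes_inverses(2)[OF p] by simp
  qed
  then show ?thesis using dis st unfolding w_def by (simp add: words_def linext_word_def)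
qed

lemma perm_of_word_permutes:
  assumes w: "w \<in> words {1..n}"
  shows "perm_of_word w permutes {1..n}"
proof -
  define \<pi> where "\<pi> = perm_of_word w"
  note pw = \<pi>_def
  have len: "length w = n" using length_words[OF w] by simp
  have dis: "distinct w" and st: "set w = {1..n}" using w by (auto simp: words_def linext_word_def)
  have inj: "inj_on \<pi> {1..n}"
  proof (rule inj_onI)
    fix a b assume "a \<in> {1..n}" "b \<in> {1..n}" "\<pi> a = \<pi> b"
    then have "w ! (a - 1) = w ! (b - 1)" using pw by (simp add: perm_of_word_def)
    moreover have "a - 1 < length w" "b - 1 < length w" using len \<open>a \<in> {1..n}\<close> \<open>b \<in> {1..n}\<close> by auto
    ultimately have "a - 1 = b - 1" using nth_eq_iff_index_eq[OF dis] by blast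
    then show "a = b" using \<open>a \<in> {1..n}\<close> \<open>b \<in> {1..n}\<close> by (simp; linarith)
  qed
  have img: "\<pi> ` {1..n} = {1..n}"
  proof -
    have "\<pi> ` {1..n} = (\<lambda>k. w ! (k - 1)) ` {1..n}" using pw by (auto simp: perm_of_word_def)
    also have "\<dots> = set w"
    proof
      show "(\<lambda>k. w ! (k - 1)) ` {1..n} \<subseteq> set w" using len by auto
      show "set w \<subseteq> (\<lambda>k. w ! (k - 1)) ` {1..n}"
      proof
        fix a assume "a \<in> set w"
        then obtain p where "p < length w" "w ! p = a" by (auto simp: in_set_conv_nth)
        then show "a \<in> (\<lambda>k. w ! (k - 1)) ` {1..n}" using len by (intro image_eqI[where x = "Suc p"]) auto
      qed
    qed
    finally show ?thesis using st by simp
  qed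
  show ?thesis
    unfolding permutes_altdef \<pi>_def[symmetric] using inj img pw by (auto simp: bij_betw_def perm_of_word_def)
qed

lemma perm_of_word_lin_ext:
  assumes w: "w \<in> words {1..n}"
  shows "perm_of_word w \<in> lin_ext n R"
proof -
  define \<pi> where "\<pi> = perm_of_word w"
  note pw = \<pi>_def
  have len: "length w = n" using length_words[OF w] by simp
  have srt: "sorted_wrt (\<lambda>a b. \<not> prec R b a) w" using w by (auto simp: words_def linext_word_def)
  have p: "\<pi> permutes {1..n}" unfolding \<pi>_def by (rule perm_of_word_permutes[OF w])
  have "\<forall>i j. prec R i j \<longrightarrow> Hilbert_Choice.inv \<pi> i < Hilbert_Choice.inv \<pi> j"
  proof (intro allI impI)
    fix i j assume pr: "prec R i j"
    have ij: "i \<in> {1..n}" "j \<in> {1..n}" using R_range pr by (auto simp: prec_def)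
    let ?a = "Hilbert_Choice.inv \<pi> i" and ?b = "Hilbert_Choice.inv \<pi> j"
    have pin: "\<And>z. (Hilbert_Choice.inv \<pi> z \<in> {1..n}) = (z \<in> {1..n})" by (rule permutes_in_image[OF permutes_inv[OF p]])
    have ab: "?a \<in> {1..n}" "?b \<in> {1..n}" using ij pin by blast+
    have pa: "\<pi> ?a = i" "\<pi> ?b = j" using permutes_inverses(1)[OF p] by auto
    have "perm_of_word w ?a = i" "perm_of_word w ?b = j" using pa pw by simp_all
    then have wa: "w ! (?a - 1) = i" and wb: "w ! (?b - 1) = j" using ab unfolding perm_of_word_def by simp_all
    have "?a \<noteq> ?b" using pr wa wb by (auto simp: prec_def)
    moreover have "\<not> ?b < ?a"
    proof
      assume "?b < ?a"
      then have "?b - 1 < ?a - 1" "?a - 1 < length w" using ab len by auto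
      then have "\<not> prec R (w ! (?a - 1)) (w ! (?b - 1))" using srt by (simp add: sorted_wrt_iff_nth_less)
      then show False using wa wb pr by simp
    qed
    ultimately show "?a < ?b" by simp
  qed
  then show ?thesis using p unfolding \<pi>_def by (simp add: lin_ext_def)
qed

lemma bij_betw_word_of: "bij_betw (word_of n) (lin_ext n R) (words {1..n})"
proof (rule bij_betw_byWitness[where f' = perm_of_word])
  show "\<forall>\<pi>\<in>lin_ext n R. perm_of_word (word_of n \<pi>) = \<pi>"
  proof
    fix \<pi> assume "\<pi> \<in> lin_ext n R"
    then have p: "\<pi> permutes {1..n}" by (simp add: lin_ext_def)
    show "perm_of_word (word_of n \<pi>) = \<pi>"
    proof
      fix k show "perm_of_word (word_of n \<pi>) k = \<pi> k"
        using permutes_not_in[OF p, of k] nth_word_of[of k n \<pi>] by (auto simp: perm_of_word_def)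
    qed
  qed
  show "\<forall>w\<in>words {1..n}. word_of n (perm_of_word w) = w"
  proof
    fix w assume w: "w \<in> words {1..n}"
    have len: "length w = n" using length_words[OF w] by simp
    show "word_of n (perm_of_word w) = w"
    proof (rule nth_equalityI)
      show "length (word_of n (perm_of_word w)) = length w" using len by simp
      fix i assume "i < length (word_of n (perm_of_word w))"
      then have i: "Suc i \<in> {1..n}" by simp
      show "word_of n (perm_of_word w) ! i = w ! i" using nth_word_of[OF i, of "perm_of_word w"] i by (simp add: perm_of_word_def)
    qed
  qed
  show "word_of n ` lin_ext n R \<subseteq> words {1..n}" using word_of_lin_ext by blast
  show "perm_of_word ` words {1..n} \<subseteq> lin_ext n R" using perm_of_word_lin_ext by blast
qed

lemma finite_lin_ext: "finite (lin_ext n R)"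
proof -
  have "lin_ext n R \<subseteq> {p. p permutes {1..n}}" by (auto simp: lin_ext_def)
  moreover have "finite {p. p permutes {1..n}}" by (rule finite_permutations) simp
  ultimately show ?thesis by (rule finite_subset)
qed

lemma trans_mat_bar_eq_sum:
  fixes x :: "nat \<Rightarrow> 'a::comm_ring_1"
  assumes pl: "\<pi> \<in> lin_ext n R"
  shows "trans_mat_bar n R x \<pi>' \<pi> = (\<Sum>j\<in>{j\<in>{1..n}. partial n R j \<pi> = \<pi>'}. x (\<pi> j))"
proof (cases "\<pi>' = \<pi>")
  case False then show ?thesis by (simp add: trans_mat_bar_def trans_mat_def)
next
  case True
  have p: "\<pi> permutes {1..n}" using pl by (simp add: lin_ext_def)
  have "(\<Sum>i\<in>{1..n}. x i) = (\<Sum>j\<in>{1..n}. x (\<pi> j))"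
    using sum.reindex_bij_betw[OF permutes_imp_bij[OF p], of x] by simp
  also have "\<dots> = (\<Sum>j\<in>{j\<in>{1..n}. partial n R j \<pi> = \<pi>}. x (\<pi> j)) + (\<Sum>j\<in>{j\<in>{1..n}. partial n R j \<pi> \<noteq> \<pi>}. x (\<pi> j))"
    by (subst sum.union_disjoint[symmetric]) (auto intro: sum.cong)
  finally show ?thesis using True by (simp add: trans_mat_bar_def trans_mat_def)
qed

lemma trans_mat_bar_eq_prom_mat:
  fixes x :: "nat \<Rightarrow> 'a::comm_ring_1"
  assumes pl: "\<pi> \<in> lin_ext n R" and pl': "\<pi>' \<in> lin_ext n R"
  shows "trans_mat_bar n R x \<pi>' \<pi> = prom_mat {1..n} x (word_of n \<pi>) (word_of n \<pi>')"
proof -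
  have p: "\<pi> permutes {1..n}" and p': "\<pi>' permutes {1..n}" using pl pl' by (auto simp: lin_ext_def)
  have inj: "inj_on \<pi> {1..n}" using permutes_inj[OF p] by (simp add: inj_on_def inj_def)
  let ?J = "{j\<in>{1..n}. partial n R j \<pi> = \<pi>'}"
  let ?I = "{i\<in>{1..n}. promote R i (word_of n \<pi>) = word_of n \<pi>'}"
  have img: "\<pi> ` ?J = ?I"
  proof
    show "\<pi> ` ?J \<subseteq> ?I"
    proof
      fix i assume "i \<in> \<pi> ` ?J"
      then obtain j where j: "j \<in> {1..n}" "partial n R j \<pi> = \<pi>'" and ij: "i = \<pi> j" by auto
      have "word_of n (partial n R j \<pi>) = promote R (\<pi> j) (word_of n \<pi>)" by (rule word_of_partial[OF _ _ inj]) (use j(1) in auto)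
      moreover have "\<pi> j \<in> {1..n}" using iffD2[OF permutes_in_image[OF p] j(1)] .
      ultimately show "i \<in> ?I" using j ij by simp
    qed
    show "?I \<subseteq> \<pi> ` ?J"
    proof
      fix i assume i: "i \<in> ?I"
      let ?j = "Hilbert_Choice.inv \<pi> i"
      have pin: "\<And>z. (Hilbert_Choice.inv \<pi> z \<in> {1..n}) = (z \<in> {1..n})" by (rule permutes_in_image[OF permutes_inv[OF p]])
      have jn: "?j \<in> {1..n}" using i pin by blast
      have pj: "\<pi> ?j = i" using permutes_inverses(1)[OF p] by simp
      have "word_of n (partial n R ?j \<pi>) = promote R (\<pi> ?j) (word_of n \<pi>)" by (rule word_of_partial[OF _ _ inj]) (use jn in auto)
      then have wq: "word_of n (partial n R ?j \<pi>) = word_of n \<pi>'" using i pj by simp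
      have o1: "\<forall>k. k \<notin> {1..n} \<longrightarrow> partial n R ?j \<pi> k = k"
        using partial_outside[of ?j] jn permutes_not_in[OF p] by auto
      have o2: "\<forall>k. k \<notin> {1..n} \<longrightarrow> \<pi>' k = k" using permutes_not_in[OF p'] by auto
      have "partial n R ?j \<pi> = \<pi>'" using word_of_inj[OF o1 o2 wq] .
      then have "?j \<in> ?J" using jn by simp
      then show "i \<in> \<pi> ` ?J" by (rule image_eqI[where f = \<pi>, OF pj[symmetric]])
    qed
  qed
  have injJ: "inj_on \<pi> ?J" using inj by (rule inj_on_subset) auto
  have "trans_mat_bar n R x \<pi>' \<pi> = (\<Sum>j\<in>?J. x (\<pi> j))" by (rule trans_mat_bar_eq_sum[OF pl])
  also have "\<dots> = (\<Sum>i\<in>\<pi> ` ?J. x i)" using sum.reindex[OF injJ, of x] by simp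
  also have "\<dots> = prom_mat {1..n} x (word_of n \<pi>) (word_of n \<pi>')" unfolding img prom_mat_def by simp
  finally show ?thesis .
qed

lemma det_trans_mat_bar_eq_char_det:
  fixes x :: "nat \<Rightarrow> 'a::comm_ring_1"
  shows "det_on (lin_ext n R) (\<lambda>\<pi>' \<pi>. (if \<pi>' = \<pi> then lam else 0) - trans_mat_bar n R x \<pi>' \<pi>)
       = char_det {1..n} x lam"
proof -
  let ?P = "{1..n}"
  let ?L = "\<lambda>w w'. (if w = w' then lam else 0) - prom_mat ?P x w w'"
  have bij: "bij_betw (word_of n) (lin_ext n R) (words ?P)" by (rule bij_betw_word_of)
  have "det_on (lin_ext n R) (\<lambda>\<pi>' \<pi>. (if \<pi>' = \<pi> then lam else 0) - trans_mat_bar n R x \<pi>' \<pi>)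
      = det_on (lin_ext n R) (\<lambda>\<pi>' \<pi>. ?L (word_of n \<pi>) (word_of n \<pi>'))"
  proof (rule det_on_cong)
    fix \<pi>' \<pi> assume a: "\<pi>' \<in> lin_ext n R" "\<pi> \<in> lin_ext n R"
    have "(\<pi>' = \<pi>) = (word_of n \<pi>' = word_of n \<pi>)"
      using bij_betw_imp_inj_on[OF bij] a by (auto dest: inj_onD)
    then show "(if \<pi>' = \<pi> then lam else 0) - trans_mat_bar n R x \<pi>' \<pi> = ?L (word_of n \<pi>) (word_of n \<pi>')"
      using trans_mat_bar_eq_prom_mat[OF a(2) a(1), of x] by auto
  qed
  also have "\<dots> = det_on (words ?P) (\<lambda>w' w. ?L w w')"
    by (rule det_on_reindex[OF bij finite_lin_ext, symmetric])
  also have "\<dots> = det_on (words ?P) ?L"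
    by (rule det_on_transpose) (use finite_words Up_finite[OF Up_top] in blast)
  finally show ?thesis by (simp add: char_det_def)
qed

lemma char_det_top:
  "char_det {1..n} x lam = (\<Prod>S\<in>Up. (lam - (\<Sum>i\<in>S. x i)) ^ nat (derangement_number n R S))"
proof -
  have "{T\<in>Up. T \<subseteq> {1..n}} = Up" using Up_subset by auto
  then show ?thesis using char_det_factor[OF Up_top] derangement_number_eq_eig_mult by simp
qed

end

theorem theorem5p2:
  fixes n :: nat and le :: "nat \<Rightarrow> nat \<Rightarrow> bool"
    and x :: "nat \<Rightarrow> 'a::comm_ring_1" and lam :: 'a
  assumes "rooted_forest n le" and "natural_labeling le"
  shows "(\<forall>S\<in>upper_sets n le. derangement_number n le S \<ge> 0) \<and>
         det_on (lin_ext n le)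
           (\<lambda>\<pi>' \<pi>. (if \<pi>' = \<pi> then lam else 0) - trans_mat_bar n le x \<pi>' \<pi>)
         = (\<Prod>S\<in>upper_sets n le. (lam - (\<Sum>i\<in>S. x i)) ^ nat (derangement_number n le S))"
proof -
  interpret natural_rooted_forest n le using assms by unfold_locales
  show ?thesis
    unfolding det_trans_mat_bar_eq_char_det char_det_top
    using derangement_number_eq_eig_mult by simp
qed

end
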